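(* Let $n\ge 1$, $N=\{1,\dots,n\}$, $0\le t_0<t_1$, $x_0\in\mathbb{R}^m$, and for each $k\in N$ let $U_k\subset C([t_0,t_1];\mathbb{R}^{m_k})$ be a set of admissible controls as described in the context (nonempty, closed, uniformly bounded by $M_k$, equicontinuous), which is in addition convex. Let $f\in Y$. For each $i\in N$ let $\boldsymbol{J}_i=(J^i_1,\dots,J^i_{d_i}):U_1\times\dots\times U_n\to\mathcal{I}(\mathbb{R})^{d_i}$ be the payoff $$\boldsymbol{J}_i(u_1,\dots,u_n)=\boldsymbol{\psi}_i(x(t_1))+\int_{t_0}^{t_1}\boldsymbol{L}_i(t,x(t),u_1(t),\dots,u_n(t))\,\mathrm{d}t,$$ where $x$ is the state generated by $(u_1,\dots,u_n)$. Suppose that for each $i\in N$ there exists $k_i\in\{1,\dots,d_i\}$ such that (i) $J^i_{k_i}:U_1\times\dots\times U_n\to\mathcal{I}(\mathbb{R})$ is continuous, and (ii) for each $u_{-i}\in U_{-i}=\prod_{j\ne i}U_j$, the map $u_i\mapsto J^i_{k_i}(u_i,u_{-i})$ is generalized $\mathcal{I}(\mathbb{R}_+)$-quasi-concave on $U_i$. Then the multi-objective interval differential game has at least one open-loop Pareto-Nash equilibrium, i.e. there exists $(u_1^*,\dots,u_n^* )\in U_1\times\dots\times U_n$ such that for every $i\in N$ and every $u_i\in U_i$, $\boldsymbol{J}_i(u_i^*,u_{-i}^* )\nprec\boldsymbol{J}_i(u_i,u_{-i}^* )$.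
   Context: Interval arithmetic: $\mathcal{I}(\mathbb{R})$ is the set of compact intervals $[\underline a,\overline a]$, $\mathcal{I}(\mathbb{R})^d$ the set of $d$-tuples of such intervals; addition is $[a,b]+[c,d]=[a+c,b+d]$ componentwise, and $\lambda[a,b]=[\min(\lambda a,\lambda b),\max(\lambda a,\lambda b)]$. The gH-difference is $[\underline a,\overline a]\ominus_{gH}[\underline b,\overline b]=[\min\{\underline a-\underline b,\overline a-\overline b\},\max\{\underline a-\underline b,\overline a-\overline b\}]$, taken componentwise for interval vectors. $\mathcal{I}(\mathbb{R}_+)$ is the set of compact intervals contained in $[0,+\infty)$, $\mathcal{I}(\mathbb{R}_+)^d$ the $d$-tuples of them, and $\mathrm{int}\,\mathcal{I}(\mathbb{R}_+)^d$ its interior (the $d$-tuples of compact intervals each contained in $(0,+\infty)$). For $\boldsymbol A,\boldsymbol B\in\mathcal{I}(\mathbb{R})^d$, $\boldsymbol B\prec\boldsymbol A$ means $\boldsymbol A\ominus_{gH}\boldsymbol B\in\mathrm{int}\,\mathcal{I}(\mathbb{R}_+)^d$; $\boldsymbol B\nprec\boldsymbol A$ means this fails. An interval-valued function $F$ on a Hausdorff space $\mathcal X$ is continuous if for each $x$ and $\epsilon>0$ there is an open neighbourhood $o(x)$ with $F(x')\ominus_{gH}F(x)\subset(-\epsilon,\epsilon)$ for all $x'\in o(x)$. For $\mathcal K$ a nonempty convex set, $F:\mathcal K\to\mathcal I(\mathbb R)$ is generalized $\mathcal{I}(\mathbb{R}_+)$-quasi-concave if for all $x_1,x_2\in\mathcal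 K$, $\boldsymbol A\in\mathcal I(\mathbb R)$, $\lambda\in[0,1]$: whenever $\boldsymbol A\ominus_{gH}F(x_j)\notin\mathrm{int}\,\mathcal I(\mathbb R_+)$ for $j=1,2$, then $\boldsymbol A\ominus_{gH}F(\lambda x_1+(1-\lambda)x_2)\notin\mathrm{int}\,\mathcal I(\mathbb R_+)$. Setting: $C([t_0,t_1];\mathbb{R}^{m_k})$ carries the norm $\|u\|=\max_{t}\|u(t)\|$; $U_1\times\dots\times U_n$ carries the product topology. Each $U_k$ is nonempty and closed, there is $M_k>0$ with $\|u_k\|\le M_k$ for all $u_k\in U_k$, and $U_k$ is equicontinuous (hence compact). $D=\{(t,x,u_1,\dots,u_n): t\in[t_0,t_1],x\in\mathbb R^m,\|u_k\|\le M_k\}$, and $Y$ is the set of continuous $f:D\to\mathbb R^m$ for which there are $M,L>0$ with $\sup_D\|f\|\le M$ and $\|f(t,x_1,u)-f(t,x_2,u)\|\le L\|x_1-x_2\|$. For $f\in Y$ and $u_k\in U_k$, the state $x$ is the unique solution of $\dot x(t)=f(t,x(t),u_1(t),\dots,u_n(t))$, $x(t_0)=x_0$. Here $\boldsymbol\psi_i:\mathbb R^m\to\mathcal I(\mathbb R)^{d_i}$ and $\boldsymbol L_i:[t_0,t_1]\times\mathbb R^m\times\mathbb R^{m_1}\times\dots\times\mathbb R^{m_n}\to\mathcal I(\mathbb R)^{d_i}$; the integral of an interval-vector-valued function is the Aumann integral, which for integrable bounded functions equals the vector of intervals $[\int\underline f_j,\int\overline f_j]$ of integrals of the endpoint functions.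 *)

theory Defs
  imports "HOL-Analysis.Analysis" "HOL-Library.Interval"
begin

text \<open>An interval vector of dimension d is a
function nat => real interval, whose components 1..d are relevant.\<close>

definition gH_diff :: "real interval \<Rightarrow> real interval \<Rightarrow> real interval" where
  "gH_diff A B = Ivl (min (lower A - lower B) (upper A - upper B))
                     (max (lower A - lower B) (upper A - upper B))"

definition in_int_Rplus :: "real interval \<Rightarrow> bool" where
  "in_int_Rplus A \<longleftrightarrow> lower A > 0"

text \<open>B strictly precedes A (d-dimensional interval vectors): A gH-minus B lies in int I(R_+)^d\<close>
definition ivl_prec :: "nat \<Rightarrow> (nat \<Rightarrow> real interval) \<Rightarrow> (nat \<Rightarrow> real interval) \<Rightarrow> bool" where
  "ivl_prec d B A \<longleftrightarrow> (\<forall>j\<in>{1..d}. in_int_Rplus (gH_diff (A j) (B j)))"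

definition aumann_integral :: "real \<Rightarrow> real \<Rightarrow> (real \<Rightarrow> real interval) \<Rightarrow> real interval" where
  "aumann_integral a b F = Ivl (integral {a..b} (\<lambda>t. lower (F t))) (integral {a..b} (\<lambda>t. upper (F t)))"

text \<open>A point of R^mk is represented as v :: nat => real with v j = 0 for j >= mk.\<close>
definition vnorm :: "nat \<Rightarrow> (nat \<Rightarrow> real) \<Rightarrow> real" where
  "vnorm mk v = sqrt (\<Sum>j<mk. (v j)\<^sup>2)"

definition is_vec :: "nat \<Rightarrow> (nat \<Rightarrow> real) \<Rightarrow> bool" where
  "is_vec mk v \<longleftrightarrow> (\<forall>j. mk \<le> j \<longrightarrow> v j = 0)"

text \<open>C([t0,t1]; R^mk): continuous functions on [t0,t1], extended by 0 outside.\<close>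
definition Cspace :: "real \<Rightarrow> real \<Rightarrow> nat \<Rightarrow> (real \<Rightarrow> nat \<Rightarrow> real) set" where
  "Cspace t0 t1 mk = {u. (\<forall>t\<in>{t0..t1}. is_vec mk (u t))
      \<and> (\<forall>j. continuous_on {t0..t1} (\<lambda>t. u t j))
      \<and> (\<forall>t. t \<notin> {t0..t1} \<longrightarrow> u t = (\<lambda>j. 0))}"

definition cnorm :: "real \<Rightarrow> real \<Rightarrow> nat \<Rightarrow> (real \<Rightarrow> nat \<Rightarrow> real) \<Rightarrow> real" where
  "cnorm t0 t1 mk u = (SUP t\<in>{t0..t1}. vnorm mk (u t))"

definition cdist :: "real \<Rightarrow> real \<Rightarrow> nat \<Rightarrow> (real \<Rightarrow> nat \<Rightarrow> real) \<Rightarrow> (real \<Rightarrow> nat \<Rightarrow> real) \<Rightarrow> real" where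
  "cdist t0 t1 mk u v = cnorm t0 t1 mk (\<lambda>t j. u t j - v t j)"

definition closed_ctrl :: "real \<Rightarrow> real \<Rightarrow> nat \<Rightarrow> (real \<Rightarrow> nat \<Rightarrow> real) set \<Rightarrow> bool" where
  "closed_ctrl t0 t1 mk U \<longleftrightarrow> (\<forall>s u. (\<forall>l. s l \<in> U) \<and> u \<in> Cspace t0 t1 mk
      \<and> (\<lambda>l. cdist t0 t1 mk (s l) u) \<longlonglongrightarrow> 0 \<longrightarrow> u \<in> U)"

definition equicont_ctrl :: "real \<Rightarrow> real \<Rightarrow> nat \<Rightarrow> (real \<Rightarrow> nat \<Rightarrow> real) set \<Rightarrow> bool" where
  "equicont_ctrl t0 t1 mk U \<longleftrightarrow> (\<forall>e>0. \<exists>\<delta>>0. \<forall>u\<in>U. \<forall>s\<in>{t0..t1}. \<forall>t\<in>{t0..t1}.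
      \<bar>s - t\<bar> < \<delta> \<longrightarrow> vnorm mk (\<lambda>j. u s j - u t j) < e)"

definition convex_ctrl :: "(real \<Rightarrow> nat \<Rightarrow> real) set \<Rightarrow> bool" where
  "convex_ctrl U \<longleftrightarrow> (\<forall>u\<in>U. \<forall>v\<in>U. \<forall>c\<in>{0..1::real}. (\<lambda>t j. c * u t j + (1 - c) * v t j) \<in> U)"

definition admissible_ctrl :: "real \<Rightarrow> real \<Rightarrow> nat \<Rightarrow> real \<Rightarrow> (real \<Rightarrow> nat \<Rightarrow> real) set \<Rightarrow> bool" where
  "admissible_ctrl t0 t1 mk Mk U \<longleftrightarrow> U \<noteq> {} \<and> U \<subseteq> Cspace t0 t1 mk \<and> closed_ctrl t0 t1 mk U
     \<and> (\<forall>u\<in>U. cnorm t0 t1 mk u \<le> Mk) \<and> equicont_ctrl t0 t1 mk U"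

definition profiles :: "nat \<Rightarrow> (nat \<Rightarrow> (real \<Rightarrow> nat \<Rightarrow> real) set) \<Rightarrow> (nat \<Rightarrow> real \<Rightarrow> nat \<Rightarrow> real) set" where
  "profiles n U = {u. (\<forall>k\<in>{1..n}. u k \<in> U k) \<and> (\<forall>k. k \<notin> {1..n} \<longrightarrow> u k = (\<lambda>t j. 0))}"

definition pdist :: "real \<Rightarrow> real \<Rightarrow> nat \<Rightarrow> (nat \<Rightarrow> nat) \<Rightarrow> (nat \<Rightarrow> real \<Rightarrow> nat \<Rightarrow> real) \<Rightarrow> (nat \<Rightarrow> real \<Rightarrow> nat \<Rightarrow> real) \<Rightarrow> real" where
  "pdist t0 t1 n m u v = (\<Sum>k\<in>{1..n}. cdist t0 t1 (m k) (u k) (v k))"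

definition domD :: "real \<Rightarrow> real \<Rightarrow> nat \<Rightarrow> (nat \<Rightarrow> nat) \<Rightarrow> (nat \<Rightarrow> real)
    \<Rightarrow> (real \<times> (real^'m) \<times> (nat \<Rightarrow> nat \<Rightarrow> real)) set" where
  "domD t0 t1 n m M = {(t, x, w). t \<in> {t0..t1} \<and> (\<forall>k\<in>{1..n}. is_vec (m k) (w k) \<and> vnorm (m k) (w k) \<le> M k)
       \<and> (\<forall>k. k \<notin> {1..n} \<longrightarrow> w k = (\<lambda>j. 0))}"

definition Ddist :: "nat \<Rightarrow> (nat \<Rightarrow> nat) \<Rightarrow> real \<times> (real^'m) \<times> (nat \<Rightarrow> nat \<Rightarrow> real)
    \<Rightarrow> real \<times> (real^'m) \<times> (nat \<Rightarrow> nat \<Rightarrow> real) \<Rightarrow> real" where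
  "Ddist n m p q = (case p of (t, x, w) \<Rightarrow> case q of (s, y, v) \<Rightarrow>
       \<bar>t - s\<bar> + norm (x - y) + (\<Sum>k\<in>{1..n}. vnorm (m k) (\<lambda>j. w k j - v k j)))"

definition classY :: "real \<Rightarrow> real \<Rightarrow> nat \<Rightarrow> (nat \<Rightarrow> nat) \<Rightarrow> (nat \<Rightarrow> real)
    \<Rightarrow> (real \<Rightarrow> real^'m \<Rightarrow> (nat \<Rightarrow> nat \<Rightarrow> real) \<Rightarrow> real^'m) \<Rightarrow> bool" where
  "classY t0 t1 n m M f \<longleftrightarrow>
     (\<forall>p\<in>domD t0 t1 n m M. \<forall>e>0. \<exists>\<delta>>0. \<forall>q\<in>domD t0 t1 n m M.
         Ddist n m q p < \<delta> \<longrightarrow> norm (case_prod (\<lambda>t. case_prod (f t)) q - case_prod (\<lambda>t. case_prod (f t)) p) < e)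
   \<and> (\<exists>B>0. \<forall>(t, x, w)\<in>domD t0 t1 n m M. norm (f t x w) \<le> B)
   \<and> (\<exists>L>0. \<forall>(t, x, w)\<in>domD t0 t1 n m M. \<forall>y. norm (f t x w - f t y w) \<le> L * norm (x - y))"

definition state :: "real \<Rightarrow> real \<Rightarrow> real^'m \<Rightarrow> (real \<Rightarrow> real^'m \<Rightarrow> (nat \<Rightarrow> nat \<Rightarrow> real) \<Rightarrow> real^'m)
    \<Rightarrow> (nat \<Rightarrow> real \<Rightarrow> nat \<Rightarrow> real) \<Rightarrow> real \<Rightarrow> real^'m" where
  "state t0 t1 x0 f u = (THE x. x t0 = x0 \<and>
      (\<forall>t\<in>{t0..t1}. (x has_vector_derivative f t (x t) (\<lambda>k. u k t)) (at t within {t0..t1}))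
      \<and> (\<forall>t. t \<notin> {t0..t1} \<longrightarrow> x t = x0))"

definition payoff :: "real \<Rightarrow> real \<Rightarrow> real^'m \<Rightarrow> (real \<Rightarrow> real^'m \<Rightarrow> (nat \<Rightarrow> nat \<Rightarrow> real) \<Rightarrow> real^'m)
    \<Rightarrow> (real^'m \<Rightarrow> nat \<Rightarrow> real interval)
    \<Rightarrow> (real \<Rightarrow> real^'m \<Rightarrow> (nat \<Rightarrow> nat \<Rightarrow> real) \<Rightarrow> nat \<Rightarrow> real interval)
    \<Rightarrow> (nat \<Rightarrow> real \<Rightarrow> nat \<Rightarrow> real) \<Rightarrow> nat \<Rightarrow> real interval" where
  "payoff t0 t1 x0 f psi L u = (let x = state t0 t1 x0 f u in
     (\<lambda>j. psi (x t1) j + aumann_integral t0 t1 (\<lambda>t. L t (x t) (\<lambda>k. u k t) j)))"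

definition ivl_continuous_on :: "('a \<Rightarrow> 'a \<Rightarrow> real) \<Rightarrow> 'a set \<Rightarrow> ('a \<Rightarrow> real interval) \<Rightarrow> bool" where
  "ivl_continuous_on dst S F \<longleftrightarrow> (\<forall>x\<in>S. \<forall>e>0. \<exists>\<delta>>0. \<forall>x'\<in>S. dst x' x < \<delta> \<longrightarrow>
      set_of (gH_diff (F x') (F x)) \<subseteq> {-e<..<e})"

definition gen_quasi_concave :: "(real \<Rightarrow> 'a \<Rightarrow> 'a \<Rightarrow> 'a) \<Rightarrow> 'a set \<Rightarrow> ('a \<Rightarrow> real interval) \<Rightarrow> bool" where
  "gen_quasi_concave comb K F \<longleftrightarrow> (\<forall>x1\<in>K. \<forall>x2\<in>K. \<forall>A. \<forall>c\<in>{0..1}.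
      \<not> in_int_Rplus (gH_diff A (F x1)) \<and> \<not> in_int_Rplus (gH_diff A (F x2))
      \<longrightarrow> \<not> in_int_Rplus (gH_diff A (F (comb c x1 x2))))"

definition ctrl_comb :: "real \<Rightarrow> (real \<Rightarrow> nat \<Rightarrow> real) \<Rightarrow> (real \<Rightarrow> nat \<Rightarrow> real) \<Rightarrow> (real \<Rightarrow> nat \<Rightarrow> real)" where
  "ctrl_comb c u v = (\<lambda>t j. c * u t j + (1 - c) * v t j)"

end

theory Submission
  imports Defs "HOL-Complex_Analysis.Great_Picard"
begin

(* Only the selected component k_i of each payoff matters: a deviation that is a strict
   improvement for the vector J_i raises both endpoints of its component k_i.  So it suffices
   to find a profile from which no player can raise both endpoints of G_i = J^i_{k_i}.
   If there were none, every profile would admit such a deviation; the gain of a fixed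
   deviation is continuous in the profile and the profile space is compact (Arzela-Ascoli),
   so finitely many deviations V_l cover it.  Nash's map, which moves each player's weight
   towards her currently gaining deviations, has a fixed point by Brouwer's theorem.  At the
   fixed point some player plays a convex mixture of deviations that all gain against the
   fixed profile; by quasi-concavity of G_i in her own strategy the mixture, which is her
   current strategy, gains against itself, which is absurd. *)

section \<open>Brouwer's fixed point theorem on the cube [0,1]^N\<close>

lemma finite_common_subseq:
  fixes P :: "'a \<Rightarrow> (nat \<Rightarrow> nat) \<Rightarrow> bool"
  assumes "finite I"
    and refine: "\<And>a r. a \<in> I \<Longrightarrow> strict_mono r \<Longrightarrow> \<exists>k::nat \<Rightarrow> nat. strict_mono k \<and> P a (r \<circ> k)"
    and subseq: "\<And>a r (k::nat \<Rightarrow> nat). a \<in> I \<Longrightarrow> P a r \<Longrightarrow> strict_mono k \<Longrightarrow> P a (r \<circ> k)"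
  shows "\<exists>r. strict_mono r \<and> (\<forall>a\<in>I. P a r)"
proof -
  have "\<exists>r. strict_mono r \<and> (\<forall>a\<in>J. P a r)" if "J \<subseteq> I" for J
    using finite_subset[OF that \<open>finite I\<close>] that
  proof (induction J rule: finite_induct)
    case empty
    show ?case using strict_mono_id by blast
  next
    case (insert a J)
    then obtain r where r: "strict_mono r" "\<forall>b\<in>J. P b r" by auto
    have "a \<in> I" using insert.prems by simp
    then obtain k where k: "strict_mono k" "P a (r \<circ> k)" using refine r(1) by blast
    have "P b (r \<circ> k)" if "b \<in> J" for b
      using subseq[of b r k] that r(2) k(1) insert.prems by blast
    then have "\<forall>b\<in>insert a J. P b (r \<circ> k)" using k(2) by blast
    with strict_mono_o[OF r(1) k(1)] show ?case by blast
  qed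
  then show ?thesis by blast
qed

(* Points are nat-indexed and coordinates from N on are ignored: N is the number of deviations
   produced by compactness, not the dimension of a type, so the library's Brouwer theorem on
   euclidean types does not apply and is rederived from Kuhn's lemma. *)
definition cube :: "nat \<Rightarrow> (nat \<Rightarrow> real) set" where
  "cube N = {x. \<forall>j<N. 0 \<le> x j \<and> x j \<le> 1}"

lemma cube_approximate_fixpoint:
  assumes maps: "\<And>x. x \<in> cube N \<Longrightarrow> F x \<in> cube N" and "0 < p"
  shows "\<exists>q r s. (\<forall>j<N. q j < p)
      \<and> (\<forall>i<N. \<forall>j<N. r i j \<in> {q j..q j + 1} \<and> s i j \<in> {q j..q j + 1})
      \<and> (\<forall>i<N. real (r i i) / p \<le> F (\<lambda>j. real (r i j) / p) i)
      \<and> (\<forall>i<N. F (\<lambda>j. real (s i j) / p) i \<le> real (s i i) / p)"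
proof -
  define grid where "grid x = (\<lambda>j. real (x j) / real p)" for x :: "nat \<Rightarrow> nat"
  define label where "label x i = (if x i = 0 \<or> grid x i < F (grid x) i then 0 else 1::nat)" for x i
  have grid_cube: "grid x \<in> cube N" if "\<forall>j<N. x j \<le> p" for x
    using that \<open>0 < p\<close> by (auto simp: cube_def grid_def)
  have label0: "grid x i \<le> F (grid x) i" if "label x i = 0" "\<forall>j<N. x j \<le> p" "i < N" for x i
  proof (cases "x i = 0")
    case True
    then show ?thesis using maps[OF grid_cube[OF that(2)]] that(3) by (simp add: cube_def grid_def)
  qed (use that(1) in \<open>auto simp: label_def split: if_splits\<close>)
  have label1: "F (grid x) i \<le> grid x i" if "label x i \<noteq> 0" for x i
    using that by (auto simp: label_def split: if_splits)
  have label_top: "label x i = 1" if "\<forall>j<N. x j \<le> p" "i < N" "x i = p" for x i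
  proof -
    have "grid x i = 1" using that(3) \<open>0 < p\<close> by (simp add: grid_def)
    moreover have "F (grid x) i \<le> 1" using maps[OF grid_cube[OF that(1)]] that(2) by (simp add: cube_def)
    ultimately show ?thesis using that(3) \<open>0 < p\<close> by (auto simp: label_def)
  qed
  obtain q where q: "\<forall>i<N. q i < p"
    and cells: "\<forall>i<N. \<exists>r s. (\<forall>j<N. q j \<le> r j \<and> r j \<le> q j + 1) \<and> (\<forall>j<N. q j \<le> s j \<and> s j \<le> q j + 1)
                         \<and> label r i \<noteq> label s i"
  proof (rule kuhn_lemma[OF \<open>0 < p\<close>, of N label])
    show "\<forall>x. (\<forall>i<N. x i \<le> p) \<longrightarrow> (\<forall>i<N. label x i = 0 \<or> label x i = 1)"
      by (simp add: label_def)
    show "\<forall>x. (\<forall>i<N. x i \<le> p) \<longrightarrow> (\<forall>i<N. x i = 0 \<longrightarrow> label x i = 0)"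
      by (simp add: label_def)
    show "\<forall>x. (\<forall>i<N. x i \<le> p) \<longrightarrow> (\<forall>i<N. x i = p \<longrightarrow> label x i = 1)"
      using label_top by blast
  qed
  have "\<forall>i<N. \<exists>r s. (\<forall>j<N. r j \<in> {q j..q j + 1} \<and> s j \<in> {q j..q j + 1}) \<and> label r i = 0 \<and> label s i \<noteq> 0"
  proof (intro allI impI)
    fix i assume "i < N"
    then obtain r s where "\<forall>j<N. r j \<in> {q j..q j + 1} \<and> s j \<in> {q j..q j + 1}" "label r i \<noteq> label s i"
      using cells by (metis atLeastAtMost_iff)
    moreover have "label x i = 0 \<or> label x i = 1" for x by (simp add: label_def)
    ultimately show "\<exists>r s. (\<forall>j<N. r j \<in> {q j..q j + 1} \<and> s j \<in> {q j..q j + 1}) \<and> label r i = 0 \<and> label s i \<noteq> 0"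
      by metis
  qed
  then obtain r s where rs: "\<And>i. i < N \<Longrightarrow> (\<forall>j<N. r i j \<in> {q j..q j + 1} \<and> s i j \<in> {q j..q j + 1})
                                      \<and> label (r i) i = 0 \<and> label (s i) i \<noteq> 0"
    by metis
  have r_le: "\<forall>j<N. r i j \<le> p" if "i < N" for i using rs[OF that] q by fastforce
  show ?thesis
  proof (rule exI[of _ q], rule exI[of _ r], rule exI[of _ s], intro conjI allI impI)
    show "real (r i i) / p \<le> F (\<lambda>j. real (r i j) / p) i" if "i < N" for i
      using label0[OF _ r_le[OF that] that] rs[OF that] by (simp add: grid_def)
    show "F (\<lambda>j. real (s i j) / p) i \<le> real (s i i) / p" if "i < N" for i
      using label1[of "s i" i] rs[OF that] by (simp add: grid_def)
  qed (use q rs in auto)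
qed

lemma cube_convergent_subseq:
  assumes "\<And>k. z k \<in> cube N"
  obtains \<sigma> :: "nat \<Rightarrow> nat" and x where "strict_mono \<sigma>" "x \<in> cube N"
    and "\<forall>j<N. (\<lambda>k. z (\<sigma> k) j) \<longlonglongrightarrow> x j"
proof -
  have "\<exists>\<sigma>. strict_mono \<sigma> \<and> (\<forall>j\<in>{..<N}. convergent (\<lambda>k. z (\<sigma> k) j))"
  proof (rule finite_common_subseq)
    fix j and \<sigma> :: "nat \<Rightarrow> nat" assume "j \<in> {..<N}"
    then have "bounded (range (\<lambda>k. z (\<sigma> k) j))"
      using assms unfolding bounded_iff cube_def by (intro exI[of _ 1]) auto
    then obtain c \<tau> where "strict_mono \<tau>" "((\<lambda>k. z (\<sigma> k) j) \<circ> \<tau>) \<longlonglongrightarrow> c"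
      using bounded_imp_convergent_subsequence by blast
    then show "\<exists>\<tau>::nat \<Rightarrow> nat. strict_mono \<tau> \<and> convergent (\<lambda>k. z ((\<sigma> \<circ> \<tau>) k) j)"
      by (auto simp: comp_def convergent_def)
  next
    fix j \<sigma> and \<tau> :: "nat \<Rightarrow> nat"
    assume "convergent (\<lambda>k. z (\<sigma> k) j)" "strict_mono \<tau>"
    then show "convergent (\<lambda>k. z ((\<sigma> \<circ> \<tau>) k) j)"
      using LIMSEQ_subseq_LIMSEQ by (fastforce simp: comp_def convergent_def)
  qed auto
  then obtain \<sigma> where \<sigma>: "strict_mono \<sigma>" and conv: "\<And>j. j < N \<Longrightarrow> convergent (\<lambda>k. z (\<sigma> k) j)"
    by auto
  define x where "x j = lim (\<lambda>k. z (\<sigma> k) j)" for j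
  have lim: "(\<lambda>k. z (\<sigma> k) j) \<longlonglongrightarrow> x j" if "j < N" for j
    using conv[OF that] by (simp add: x_def convergent_LIMSEQ_iff)
  have "x \<in> cube N"
    unfolding cube_def
  proof (intro CollectI allI impI conjI)
    fix j assume j: "j < N"
    show "0 \<le> x j" "x j \<le> 1"
      using assms LIMSEQ_le_const[OF lim[OF j]] LIMSEQ_le_const2[OF lim[OF j]] j
      by (auto simp: cube_def)
  qed
  with \<sigma> lim show thesis using that by blast
qed

lemma grid_neighbour_tendsto:
  assumes "(\<lambda>k. real (q k) / real (Suc (\<sigma> k))) \<longlonglongrightarrow> c" "strict_mono \<sigma>" "\<And>k. g k \<in> {q k..q k + 1}"
  shows "(\<lambda>k. real (g k) / real (Suc (\<sigma> k))) \<longlonglongrightarrow> c"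
proof -
  have mesh: "(\<lambda>k. inverse (real (Suc (\<sigma> k)))) \<longlonglongrightarrow> 0"
    using LIMSEQ_subseq_LIMSEQ[OF LIMSEQ_inverse_real_of_nat assms(2)] by (simp add: comp_def)
  have "(\<lambda>k. real (g k) / real (Suc (\<sigma> k)) - real (q k) / real (Suc (\<sigma> k))) \<longlonglongrightarrow> 0"
  proof (rule Lim_null_comparison[OF always_eventually mesh], rule allI)
    fix k
    have "\<bar>real (g k) - real (q k)\<bar> \<le> 1" using assms(3)[of k] by auto
    then show "norm (real (g k) / real (Suc (\<sigma> k)) - real (q k) / real (Suc (\<sigma> k))) \<le> inverse (real (Suc (\<sigma> k)))"
      by (simp add: diff_divide_distrib[symmetric] abs_div divide_le_eq divide_inverse[symmetric] del: of_nat_Suc)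
  qed
  from tendsto_add[OF this assms(1)] show ?thesis by simp
qed

theorem brouwer_cube_nat:
  assumes maps: "\<And>x. x \<in> cube N \<Longrightarrow> F x \<in> cube N"
    and cont: "\<And>x y i. x \<in> cube N \<Longrightarrow> (\<And>k. y k \<in> cube N) \<Longrightarrow> (\<And>j. j < N \<Longrightarrow> (\<lambda>k. y k j) \<longlonglongrightarrow> x j)
                 \<Longrightarrow> i < N \<Longrightarrow> (\<lambda>k. F (y k) i) \<longlonglongrightarrow> F x i"
  obtains x where "x \<in> cube N" and "\<And>i. i < N \<Longrightarrow> F x i = x i"
proof -
  have "\<exists>q r s. (\<forall>j<N. q j < Suc k)
      \<and> (\<forall>i<N. \<forall>j<N. r i j \<in> {q j..q j + 1} \<and> s i j \<in> {q j..q j + 1})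
      \<and> (\<forall>i<N. real (r i i) / Suc k \<le> F (\<lambda>j. real (r i j) / Suc k) i)
      \<and> (\<forall>i<N. F (\<lambda>j. real (s i j) / Suc k) i \<le> real (s i i) / Suc k)" for k
    using cube_approximate_fixpoint[of N F "Suc k", OF maps] by simp
  then obtain Q R S where Q: "\<And>k j. j < N \<Longrightarrow> Q k j < Suc k"
    and RS: "\<And>k i j. i < N \<Longrightarrow> j < N \<Longrightarrow> R k i j \<in> {Q k j..Q k j + 1} \<and> S k i j \<in> {Q k j..Q k j + 1}"
    and R_le: "\<And>k i. i < N \<Longrightarrow> real (R k i i) / Suc k \<le> F (\<lambda>j. real (R k i j) / Suc k) i"
    and S_ge: "\<And>k i. i < N \<Longrightarrow> F (\<lambda>j. real (S k i j) / Suc k) i \<le> real (S k i i) / Suc k"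
    by metis
  define grid where "grid k x = (\<lambda>j. real (x j) / real (Suc k))" for k and x :: "nat \<Rightarrow> nat"
  have grid_cube: "grid k G \<in> cube N" if G: "\<And>j. j < N \<Longrightarrow> G j \<in> {Q k j..Q k j + 1}" for k G
  proof -
    have "real (G j) \<le> real (Suc k)" if "j < N" for j
      using G[OF that] Q[OF that, of k] by (simp del: of_nat_Suc)
    then show ?thesis by (simp add: cube_def grid_def del: of_nat_Suc)
  qed
  have grid_Q: "grid k (Q k) \<in> cube N" for k by (rule grid_cube) simp
  obtain \<sigma> x where \<sigma>: "strict_mono \<sigma>" and x: "x \<in> cube N"
    and lim: "\<forall>j<N. (\<lambda>k. grid (\<sigma> k) (Q (\<sigma> k)) j) \<longlonglongrightarrow> x j"
    by (rule cube_convergent_subseq[of "\<lambda>k. grid k (Q k)", OF grid_Q])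
  have "F x i = x i" if i: "i < N" for i
  proof -
    define a where "a k = grid (\<sigma> k) (R (\<sigma> k) i)" for k
    define b where "b k = grid (\<sigma> k) (S (\<sigma> k) i)" for k
    have a_x: "(\<lambda>k. a k j) \<longlonglongrightarrow> x j" and b_x: "(\<lambda>k. b k j) \<longlonglongrightarrow> x j" if "j < N" for j
      unfolding a_def b_def grid_def using RS[OF i that]
      by (intro grid_neighbour_tendsto[OF lim[rule_format, OF that, unfolded grid_def] \<sigma>]; simp)+
    have "a k \<in> cube N" "b k \<in> cube N" for k
      unfolding a_def b_def using grid_cube RS[OF i] by blast+
    then have Fa: "(\<lambda>k. F (a k) i) \<longlonglongrightarrow> F x i" and Fb: "(\<lambda>k. F (b k) i) \<longlonglongrightarrow> F x i"
      using cont[OF x _ a_x i] cont[OF x _ b_x i] by blast+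
    have "x i \<le> F x i" using LIMSEQ_le[OF a_x[OF i] Fa] R_le[OF i] by (simp add: a_def grid_def)
    moreover have "F x i \<le> x i" using LIMSEQ_le[OF Fb b_x[OF i]] S_ge[OF i] by (simp add: b_def grid_def)
    ultimately show ?thesis by simp
  qed
  with x that show thesis by blast
qed

section \<open>Block weights and Nash's map\<close>

(* Index l < N stands for a deviation of player iv l; within the block of each player the
   weights form a sub-probability vector, the missing mass staying on a base strategy. *)
definition block :: "nat \<Rightarrow> (nat \<Rightarrow> 'a) \<Rightarrow> 'a \<Rightarrow> nat set" where
  "block N iv k = {l. l < N \<and> iv l = k}"

definition block_weights :: "nat \<Rightarrow> (nat \<Rightarrow> 'a) \<Rightarrow> (nat \<Rightarrow> real) set" where
  "block_weights N iv = {x. (\<forall>l<N. 0 \<le> x l) \<and> (\<forall>k. sum x (block N iv k) \<le> 1)}"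

lemma finite_block [simp]: "finite (block N iv k)"
  by (simp add: block_def)

lemma block_subset: "block N iv k \<subseteq> {..<N}"
  by (auto simp: block_def)

lemma block_weights_cong:
  assumes "x \<in> block_weights N iv" "\<And>l. l < N \<Longrightarrow> y l = x l"
  shows "y \<in> block_weights N iv"
proof -
  have "sum y (block N iv k) = sum x (block N iv k)" for k
    using assms(2) by (intro sum.cong) (auto simp: block_def)
  then show ?thesis using assms by (simp add: block_weights_def)
qed

lemma block_weights_le_one:
  assumes "x \<in> block_weights N iv" "l < N"
  shows "x l \<le> 1"
proof -
  have "x l \<le> sum x (block N iv (iv l))"
    using assms by (intro member_le_sum) (auto simp: block_weights_def block_def)
  also have "\<dots> \<le> 1" using assms(1) by (simp add: block_weights_def)
  finally show ?thesis .
qed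

lemma block_weights_subset_cube: "block_weights N iv \<subseteq> cube N"
proof
  fix x assume x: "x \<in> block_weights N iv"
  have "\<And>l. l < N \<Longrightarrow> x l \<le> 1" using block_weights_le_one[OF x] .
  with x show "x \<in> cube N" by (simp add: cube_def block_weights_def)
qed

theorem brouwer_block_weights:
  assumes maps: "\<And>x. x \<in> block_weights N iv \<Longrightarrow> F x \<in> block_weights N iv"
    and cont: "\<And>x y l. x \<in> block_weights N iv \<Longrightarrow> (\<And>k. y k \<in> block_weights N iv)
                 \<Longrightarrow> (\<And>j. j < N \<Longrightarrow> (\<lambda>k. y k j) \<longlonglongrightarrow> x j) \<Longrightarrow> l < N \<Longrightarrow> (\<lambda>k. F (y k) l) \<longlonglongrightarrow> F x l"
  obtains x where "x \<in> block_weights N iv" and "\<And>l. l < N \<Longrightarrow> F x l = x l"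
proof -
  define W where "W = block_weights N iv"
  define T where "T x k = (\<Sum>l\<in>block N iv k. max 0 (x l))" for x :: "nat \<Rightarrow> real" and k
  define \<rho> where "\<rho> x l = max 0 (x l) / max 1 (T x (iv l))" for x l
  have \<rho>_W: "\<rho> x \<in> W" for x
    unfolding W_def block_weights_def
  proof (intro CollectI conjI allI impI)
    fix k
    have "sum (\<rho> x) (block N iv k) = T x k / max 1 (T x k)"
      unfolding \<rho>_def T_def sum_divide_distrib by (intro sum.cong) (auto simp: block_def)
    also have "\<dots> \<le> 1" by (simp add: divide_le_eq_1 less_max_iff_disj)
    finally show "sum (\<rho> x) (block N iv k) \<le> 1" .
  qed (simp add: \<rho>_def)
  have \<rho>_id: "\<rho> x l = x l" if "x \<in> W" "l < N" for x l
  proof -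
    have "T x (iv l) = sum x (block N iv (iv l))"
      using that unfolding T_def W_def block_weights_def by (intro sum.cong) (auto simp: block_def)
    then show ?thesis using that by (simp add: \<rho>_def W_def block_weights_def)
  qed
  have \<rho>_cont: "(\<lambda>k. \<rho> (y k) l) \<longlonglongrightarrow> \<rho> x l" if "\<And>j. j < N \<Longrightarrow> (\<lambda>k. y k j) \<longlonglongrightarrow> x j" "l < N" for x y l
  proof -
    have "(\<lambda>k. T (y k) i) \<longlonglongrightarrow> T x i" for i
      unfolding T_def using that(1) by (intro tendsto_sum tendsto_max tendsto_const) (auto simp: block_def)
    then show ?thesis
      unfolding \<rho>_def using that by (intro tendsto_divide tendsto_max tendsto_const) auto
  qed
  obtain x where x: "x \<in> cube N" and fixed: "\<And>l. l < N \<Longrightarrow> F (\<rho> x) l = x l"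
  proof (rule brouwer_cube_nat[of N "F \<circ> \<rho>"])
    show "(F \<circ> \<rho>) x \<in> cube N" for x
      using maps[OF \<rho>_W[unfolded W_def]] block_weights_subset_cube by auto
    show "(\<lambda>k. (F \<circ> \<rho>) (y k) l) \<longlonglongrightarrow> (F \<circ> \<rho>) x l"
      if "\<And>j. j < N \<Longrightarrow> (\<lambda>k. y k j) \<longlonglongrightarrow> x j" "l < N" for x y l
      using cont[OF \<rho>_W[unfolded W_def] \<rho>_W[unfolded W_def] \<rho>_cont[OF that(1)] that(2)] by simp
  qed auto
  have "x \<in> W"
    using block_weights_cong[OF maps[OF \<rho>_W[unfolded W_def, of x]], of x] fixed unfolding W_def by auto
  then have "\<rho> x \<in> W" "\<And>l. l < N \<Longrightarrow> F (\<rho> x) l = \<rho> x l"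
    using fixed \<rho>_id \<rho>_W by auto
  then show thesis using that unfolding W_def by blast
qed

definition nash_map :: "nat \<Rightarrow> (nat \<Rightarrow> 'a) \<Rightarrow> ((nat \<Rightarrow> real) \<Rightarrow> nat \<Rightarrow> real) \<Rightarrow> (nat \<Rightarrow> real) \<Rightarrow> nat \<Rightarrow> real" where
  "nash_map N iv \<phi> x l = (x l + \<phi> x l) / (1 + (\<Sum>l'\<in>block N iv (iv l). \<phi> x l'))"

lemma nash_map_block_weights:
  assumes nonneg: "\<And>x l. 0 \<le> \<phi> x l" and x: "x \<in> block_weights N iv"
  shows "nash_map N iv \<phi> x \<in> block_weights N iv"
  unfolding block_weights_def
proof (intro CollectI conjI allI impI)
  have s: "0 \<le> (\<Sum>l\<in>block N iv k. \<phi> x l)" for k using nonneg by (simp add: sum_nonneg)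
  show "0 \<le> nash_map N iv \<phi> x l" if "l < N" for l
    using that x nonneg s by (simp add: nash_map_def block_weights_def)
  fix k
  have "sum (nash_map N iv \<phi> x) (block N iv k)
      = (\<Sum>l\<in>block N iv k. (x l + \<phi> x l) / (1 + (\<Sum>l'\<in>block N iv k. \<phi> x l')))"
    unfolding nash_map_def by (intro sum.cong) (auto simp: block_def)
  also have "\<dots> = (sum x (block N iv k) + (\<Sum>l\<in>block N iv k. \<phi> x l)) / (1 + (\<Sum>l\<in>block N iv k. \<phi> x l))"
    by (simp add: sum_divide_distrib[symmetric] sum.distrib)
  also have "\<dots> \<le> 1"
    using x s[of k] by (simp add: block_weights_def divide_le_eq_1)
  finally show "sum (nash_map N iv \<phi> x) (block N iv k) \<le> 1" .
qed

lemma nash_map_fixpoint: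
  assumes nonneg: "\<And>x l. 0 \<le> \<phi> x l" and fixed: "\<And>l. l < N \<Longrightarrow> nash_map N iv \<phi> x l = x l"
    and "l0 \<in> block N iv k" "0 < \<phi> x l0"
  shows "sum x (block N iv k) = 1" and "\<forall>l\<in>block N iv k. 0 < x l \<longrightarrow> 0 < \<phi> x l"
proof -
  define s where "s = (\<Sum>l\<in>block N iv k. \<phi> x l)"
  have "\<phi> x l0 \<le> s" unfolding s_def using assms(3) nonneg by (intro member_le_sum) auto
  with assms(4) have s_pos: "0 < s" by simp
  have x_eq: "x l = \<phi> x l / s" if "l \<in> block N iv k" for l
  proof -
    have "(x l + \<phi> x l) / (1 + s) = x l"
      using fixed[of l] that by (simp add: nash_map_def block_def s_def)
    then have "\<phi> x l = x l * s" using s_pos by (simp add: field_simps)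
    then show ?thesis using s_pos by simp
  qed
  have "sum x (block N iv k) = (\<Sum>l\<in>block N iv k. \<phi> x l / s)"
    using x_eq by (intro sum.cong) auto
  also have "\<dots> = s / s" by (simp only: s_def sum_divide_distrib)
  finally show "sum x (block N iv k) = 1" using s_pos by simp
  show "\<forall>l\<in>block N iv k. 0 < x l \<longrightarrow> 0 < \<phi> x l"
    using s_pos x_eq by (auto simp: zero_less_divide_iff)
qed

theorem nash_block_weights:
  fixes \<phi> :: "(nat \<Rightarrow> real) \<Rightarrow> nat \<Rightarrow> real"
  assumes nonneg: "\<And>x l. 0 \<le> \<phi> x l"
    and cont: "\<And>x y l. x \<in> block_weights N iv \<Longrightarrow> (\<And>k. y k \<in> block_weights N iv)
                 \<Longrightarrow> (\<And>j. j < N \<Longrightarrow> (\<lambda>k. y k j) \<longlonglongrightarrow> x j) \<Longrightarrow> l < N \<Longrightarrow> (\<lambda>k. \<phi> (y k) l) \<longlonglongrightarrow> \<phi> x l"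
  obtains x where "x \<in> block_weights N iv"
    and "\<forall>k. (\<exists>l\<in>block N iv k. 0 < \<phi> x l) \<longrightarrow>
           sum x (block N iv k) = 1 \<and> (\<forall>l\<in>block N iv k. 0 < x l \<longrightarrow> 0 < \<phi> x l)"
proof -
  have "(\<lambda>k. nash_map N iv \<phi> (y k) l) \<longlonglongrightarrow> nash_map N iv \<phi> x l"
    if "x \<in> block_weights N iv" "\<And>k. y k \<in> block_weights N iv" "\<And>j. j < N \<Longrightarrow> (\<lambda>k. y k j) \<longlonglongrightarrow> x j" "l < N"
    for x y l
  proof -
    have "(\<lambda>k. \<Sum>l'\<in>block N iv (iv l). \<phi> (y k) l') \<longlonglongrightarrow> (\<Sum>l'\<in>block N iv (iv l). \<phi> x l')"
      using cont[OF that(1-3)] by (intro tendsto_sum) (auto simp: block_def)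
    moreover have "0 \<le> (\<Sum>l'\<in>block N iv (iv l). \<phi> x l')" by (simp add: nonneg sum_nonneg)
    ultimately show ?thesis
      unfolding nash_map_def using cont[OF that] that(3)[OF that(4)]
      by (intro tendsto_divide tendsto_add tendsto_const) auto
  qed
  then obtain x where x: "x \<in> block_weights N iv" and fixed: "\<And>l. l < N \<Longrightarrow> nash_map N iv \<phi> x l = x l"
    using brouwer_block_weights[of N iv "nash_map N iv \<phi>", OF nash_map_block_weights[OF nonneg]] by blast
  show thesis
    using that[OF x] nash_map_fixpoint[OF nonneg fixed] by blast
qed

section \<open>Interval-valued payoffs\<close>

lemma lower_Ivl: "lower (Ivl a b) = min a (b :: real)"
  by (simp add: Ivl.rep_eq lower.rep_eq)

lemma upper_Ivl: "upper (Ivl a (b :: real)) = b"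
  by (simp add: Ivl.rep_eq upper.rep_eq)

lemma in_int_Rplus_gH_diff_iff:
  "in_int_Rplus (gH_diff A B) \<longleftrightarrow> lower B < lower A \<and> upper B < upper A"
  by (auto simp: in_int_Rplus_def gH_diff_def lower_Ivl)

lemma ivl_continuous_onD:
  assumes "ivl_continuous_on dst S F" "x \<in> S" "0 < e"
  obtains \<delta> where "0 < \<delta>"
    and "\<And>x'. x' \<in> S \<Longrightarrow> dst x' x < \<delta> \<Longrightarrow>
           \<bar>lower (F x') - lower (F x)\<bar> < e \<and> \<bar>upper (F x') - upper (F x)\<bar> < e"
proof -
  obtain \<delta> where "0 < \<delta>" and \<delta>: "\<And>x'. x' \<in> S \<Longrightarrow> dst x' x < \<delta> \<Longrightarrow> set_of (gH_diff (F x') (F x)) \<subseteq> {-e<..<e}"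
    using assms unfolding ivl_continuous_on_def by blast
  moreover have "\<bar>lower (F x') - lower (F x)\<bar> < e \<and> \<bar>upper (F x') - upper (F x)\<bar> < e"
    if sub: "set_of (gH_diff (F x') (F x)) \<subseteq> {-e<..<e}" for x'
  proof -
    have "lower (gH_diff (F x') (F x)) \<in> set_of (gH_diff (F x') (F x))"
      and "upper (gH_diff (F x') (F x)) \<in> set_of (gH_diff (F x') (F x))"
      by (simp_all add: set_of_eq)
    then have "lower (gH_diff (F x') (F x)) \<in> {-e<..<e}" "upper (gH_diff (F x') (F x)) \<in> {-e<..<e}"
      using sub by blast+
    then show ?thesis by (auto simp: gH_diff_def lower_Ivl upper_Ivl)
  qed
  ultimately show thesis using that by blast
qed

lemma gen_quasi_concave_endpoints:
  assumes qc: "gen_quasi_concave comb K F" and "x1 \<in> K" "x2 \<in> K" "c \<in> {0..1}"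
  shows "min (lower (F x1)) (lower (F x2)) \<le> lower (F (comb c x1 x2))"
    and "min (upper (F x1)) (upper (F x2)) \<le> upper (F (comb c x1 x2))"
proof -
  have test: "\<not> in_int_Rplus (gH_diff A (F (comb c x1 x2)))"
    if "\<not> in_int_Rplus (gH_diff A (F x1))" "\<not> in_int_Rplus (gH_diff A (F x2))" for A
    using qc assms(2-4) that unfolding gen_quasi_concave_def by blast
  (* the first test interval constrains only the lower endpoint, the second only the upper *)
  define a where "a = min (lower (F x1)) (lower (F x2))"
  have "\<not> in_int_Rplus (gH_diff (Ivl a (max a (upper (F (comb c x1 x2)) + 1))) (F (comb c x1 x2)))"
    by (rule test) (auto simp: in_int_Rplus_gH_diff_iff lower_Ivl a_def)
  then show "a \<le> lower (F (comb c x1 x2))"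
    by (auto simp: in_int_Rplus_gH_diff_iff lower_Ivl upper_Ivl)
  define b where "b = min (upper (F x1)) (upper (F x2))"
  have "\<not> in_int_Rplus (gH_diff (Ivl b b) (F (comb c x1 x2)))"
    by (rule test) (auto simp: in_int_Rplus_gH_diff_iff upper_Ivl b_def)
  then have "\<not> (lower (F (comb c x1 x2)) < b \<and> upper (F (comb c x1 x2)) < b)"
    by (simp add: in_int_Rplus_gH_diff_iff lower_Ivl upper_Ivl)
  then show "b \<le> upper (F (comb c x1 x2))"
    using lower_le_upper[of "F (comb c x1 x2)"] by linarith
qed

lemma gen_quasi_concave_improvement:
  assumes "gen_quasi_concave comb K F" "x1 \<in> K" "x2 \<in> K" "c \<in> {0..1}"
    and "in_int_Rplus (gH_diff (F x1) A)" "in_int_Rplus (gH_diff (F x2) A)"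
  shows "in_int_Rplus (gH_diff (F (comb c x1 x2)) A)"
  using gen_quasi_concave_endpoints[OF assms(1-4)] assms(5,6)
  by (auto simp: in_int_Rplus_gH_diff_iff)

definition gain :: "(nat \<Rightarrow> (nat \<Rightarrow> 'c) \<Rightarrow> real interval) \<Rightarrow> nat \<Rightarrow> 'c \<Rightarrow> (nat \<Rightarrow> 'c) \<Rightarrow> real" where
  "gain G i v u = min (lower (G i (u(i := v))) - lower (G i u)) (upper (G i (u(i := v))) - upper (G i u))"

lemma gain_pos_iff: "0 < gain G i v u \<longleftrightarrow> in_int_Rplus (gH_diff (G i (u(i := v))) (G i u))"
  by (simp add: gain_def in_int_Rplus_gH_diff_iff)

lemma convex_ctrl_improvements:
  assumes "convex_ctrl K" "gen_quasi_concave ctrl_comb K F"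
  shows "convex_ctrl {v \<in> K. in_int_Rplus (gH_diff (F v) A)}"
  unfolding convex_ctrl_def
proof (intro ballI)
  fix v w and c :: real assume v: "v \<in> {v \<in> K. in_int_Rplus (gH_diff (F v) A)}"
    and w: "w \<in> {v \<in> K. in_int_Rplus (gH_diff (F v) A)}" and c: "c \<in> {0..1}"
  have "ctrl_comb c v w \<in> K" using assms(1) v w c by (simp add: convex_ctrl_def ctrl_comb_def)
  moreover have "in_int_Rplus (gH_diff (F (ctrl_comb c v w)) A)"
    using gen_quasi_concave_improvement[OF assms(2) _ _ c] v w by blast
  ultimately show "(\<lambda>t j. c * v t j + (1 - c) * w t j) \<in> {v \<in> K. in_int_Rplus (gH_diff (F v) A)}"
    by (simp add: ctrl_comb_def)
qed

lemma convex_ctrl_sum: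
  assumes C: "convex_ctrl C" and "finite I" "I \<noteq> {}" "\<And>l. l \<in> I \<Longrightarrow> X l \<in> C"
    and "\<And>l. l \<in> I \<Longrightarrow> 0 \<le> w l" "sum w I = 1"
  shows "(\<lambda>t j. \<Sum>l\<in>I. w l * X l t j) \<in> C"
  using assms(2-6)
proof (induction I arbitrary: w rule: finite_ne_induct)
  case (singleton a)
  then show ?case by simp
next
  case (insert a I)
  define s where "s = sum w I"
  have s: "0 \<le> s" "1 - w a = s"
    using insert.prems insert.hyps by (auto simp: s_def intro: sum_nonneg)
  show ?case
  proof (cases "s = 0")
    case True
    then have "\<forall>l\<in>I. w l = 0" using insert.prems insert.hyps by (simp add: s_def sum_nonneg_eq_0_iff)
    then have "(\<lambda>t j. \<Sum>l\<in>insert a I. w l * X l t j) = X a" using s True insert.hyps by simp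
    then show ?thesis using insert.prems by simp
  next
    case False
    have "(\<lambda>t j. \<Sum>l\<in>I. w l / s * X l t j) \<in> C"
      using insert.IH[of "\<lambda>l. w l / s"] insert.prems s False by (simp add: s_def sum_divide_distrib[symmetric])
    then have "ctrl_comb (w a) (X a) (\<lambda>t j. \<Sum>l\<in>I. w l / s * X l t j) \<in> C"
      using C insert.prems s unfolding convex_ctrl_def ctrl_comb_def by auto
    moreover have "ctrl_comb (w a) (X a) (\<lambda>t j. \<Sum>l\<in>I. w l / s * X l t j) = (\<lambda>t j. \<Sum>l\<in>insert a I. w l * X l t j)"
      using s False insert.hyps
      by (auto simp: ctrl_comb_def sum_distrib_left intro!: ext sum.cong)
    ultimately show ?thesis by simp
  qed
qed

lemma convex_ctrl_sum_with_base:
  assumes C: "convex_ctrl C" and "finite I" "b \<in> C" "\<And>l. l \<in> I \<Longrightarrow> X l \<in> C"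
    and w: "\<And>l. l \<in> I \<Longrightarrow> 0 \<le> w l" "sum w I \<le> 1"
  shows "(\<lambda>t j. (1 - sum w I) * b t j + (\<Sum>l\<in>I. w l * X l t j)) \<in> C"
proof (cases "sum w I = 0")
  case True
  then have "\<forall>l\<in>I. w l = 0" using w \<open>finite I\<close> by (simp add: sum_nonneg_eq_0_iff)
  then show ?thesis using True \<open>b \<in> C\<close> by simp
next
  case False
  define s where "s = sum w I"
  have "0 \<le> s" unfolding s_def using w by (intro sum_nonneg) auto
  with False w have s: "0 < s" "s \<le> 1" by (simp_all add: s_def)
  have "(\<lambda>t j. \<Sum>l\<in>I. w l / s * X l t j) \<in> C"
    using False assms s by (intro convex_ctrl_sum) (auto simp: s_def sum_divide_distrib[symmetric])
  then have "ctrl_comb s (\<lambda>t j. \<Sum>l\<in>I. w l / s * X l t j) b \<in> C"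
    using C \<open>b \<in> C\<close> s unfolding convex_ctrl_def ctrl_comb_def by auto
  moreover have "ctrl_comb s (\<lambda>t j. \<Sum>l\<in>I. w l / s * X l t j) b = (\<lambda>t j. (1 - s) * b t j + (\<Sum>l\<in>I. w l * X l t j))"
    using s by (auto simp: ctrl_comb_def sum_distrib_left intro!: ext sum.cong)
  ultimately show ?thesis by (simp add: s_def)
qed

lemma vnorm_nonneg: "0 \<le> vnorm mk v"
  by (simp add: vnorm_def sum_nonneg)

lemma abs_le_vnorm:
  assumes "j < mk"
  shows "\<bar>v j\<bar> \<le> vnorm mk v"
proof -
  have "(v j)\<^sup>2 \<le> (\<Sum>j<mk. (v j)\<^sup>2)" using assms by (intro member_le_sum) auto
  then have "sqrt ((v j)\<^sup>2) \<le> sqrt (\<Sum>j<mk. (v j)\<^sup>2)" by (rule real_sqrt_le_mono)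
  then show ?thesis by (simp add: vnorm_def)
qed

lemma vnorm_le_sum: "vnorm mk v \<le> (\<Sum>j<mk. \<bar>v j\<bar>)"
  using L2_set_le_sum_abs[of v "{..<mk}"] by (simp add: vnorm_def L2_set_def)

lemma vnorm_triangle: "vnorm mk (\<lambda>j. a j + b j) \<le> vnorm mk a + vnorm mk b"
  using L2_set_triangle_ineq[of a b "{..<mk}"] by (simp add: vnorm_def L2_set_def)

lemma vnorm_zero[simp]: "vnorm mk (\<lambda>j. 0) = 0"
  by (simp add: vnorm_def)

lemma vnorm_diff_commute: "vnorm mk (\<lambda>j. a j - b j) = vnorm mk (\<lambda>j. b j - a j)"
  by (simp add: vnorm_def power2_commute)

lemma Cspace_continuous_on: "u \<in> Cspace t0 t1 mk \<Longrightarrow> continuous_on {t0..t1} (\<lambda>t. u t j)"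
  by (simp add: Cspace_def)

lemma zero_in_Cspace: "(\<lambda>t j. 0) \<in> Cspace t0 t1 mk"
  by (simp add: Cspace_def is_vec_def)

lemma continuous_on_vnorm_diff:
  assumes "u \<in> Cspace t0 t1 mk" "w \<in> Cspace t0 t1 mk"
  shows "continuous_on {t0..t1} (\<lambda>t. vnorm mk (\<lambda>j. u t j - w t j))"
  unfolding vnorm_def using Cspace_continuous_on[OF assms(1)] Cspace_continuous_on[OF assms(2)]
  by (intro continuous_intros) auto

lemma bdd_above_vnorm_diff:
  assumes "u \<in> Cspace t0 t1 mk" "w \<in> Cspace t0 t1 mk"
  shows "bdd_above ((\<lambda>t. vnorm mk (\<lambda>j. u t j - w t j)) ` {t0..t1})"
  by (intro bounded_imp_bdd_above compact_imp_bounded compact_continuous_image continuous_on_vnorm_diff assms) auto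

lemma vnorm_le_cdist:
  assumes "u \<in> Cspace t0 t1 mk" "w \<in> Cspace t0 t1 mk" "t \<in> {t0..t1}"
  shows "vnorm mk (\<lambda>j. u t j - w t j) \<le> cdist t0 t1 mk u w"
  unfolding cdist_def cnorm_def using cSUP_upper[OF assms(3) bdd_above_vnorm_diff[OF assms(1,2)]] by simp

lemma cdist_le:
  assumes "t0 \<le> t1" "\<And>t. t \<in> {t0..t1} \<Longrightarrow> vnorm mk (\<lambda>j. u t j - w t j) \<le> e"
  shows "cdist t0 t1 mk u w \<le> e"
  unfolding cdist_def cnorm_def using assms by (intro cSUP_least) auto

lemma cdist_nonneg:
  assumes "t0 \<le> t1" "u \<in> Cspace t0 t1 mk" "w \<in> Cspace t0 t1 mk"
  shows "0 \<le> cdist t0 t1 mk u w"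
  using order_trans[OF vnorm_nonneg vnorm_le_cdist[OF assms(2,3), of t0]] assms(1) by simp

lemma cdist_self[simp]: "t0 \<le> t1 \<Longrightarrow> cdist t0 t1 mk u u = 0"
  by (simp add: cdist_def cnorm_def)

lemma cdist_commute: "cdist t0 t1 mk u w = cdist t0 t1 mk w u"
  unfolding cdist_def cnorm_def by (subst vnorm_diff_commute) simp

lemma cdist_triangle:
  assumes "t0 \<le> t1" "u \<in> Cspace t0 t1 mk" "v \<in> Cspace t0 t1 mk" "w \<in> Cspace t0 t1 mk"
  shows "cdist t0 t1 mk u w \<le> cdist t0 t1 mk u v + cdist t0 t1 mk v w"
proof (rule cdist_le[OF assms(1)])
  fix t assume t: "t \<in> {t0..t1}"
  have "vnorm mk (\<lambda>j. u t j - w t j) = vnorm mk (\<lambda>j. (u t j - v t j) + (v t j - w t j))" by simp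
  also have "\<dots> \<le> vnorm mk (\<lambda>j. u t j - v t j) + vnorm mk (\<lambda>j. v t j - w t j)" by (rule vnorm_triangle)
  also have "\<dots> \<le> cdist t0 t1 mk u v + cdist t0 t1 mk v w"
    using vnorm_le_cdist[OF assms(2,3) t] vnorm_le_cdist[OF assms(3,4) t] by simp
  finally show "vnorm mk (\<lambda>j. u t j - w t j) \<le> cdist t0 t1 mk u v + cdist t0 t1 mk v w" .
qed

lemma cdist_eq_0_imp_eq:
  assumes "t0 \<le> t1" "u \<in> Cspace t0 t1 mk" "w \<in> Cspace t0 t1 mk" "cdist t0 t1 mk u w = 0"
  shows "u = w"
proof (intro ext)
  fix t j
  show "u t j = w t j"
  proof (cases "t \<in> {t0..t1}")
    case True
    show ?thesis
    proof (cases "j < mk")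
      case j: True
      have "\<bar>u t j - w t j\<bar> \<le> 0"
        using abs_le_vnorm[OF j, of "\<lambda>j. u t j - w t j"] vnorm_le_cdist[OF assms(2,3) True] assms(4) by simp
      then show ?thesis by simp
    next
      case False
      then show ?thesis using assms(2,3) True by (simp add: Cspace_def is_vec_def)
    qed
  next
    case False
    then show ?thesis using assms(2,3) by (simp add: Cspace_def)
  qed
qed

lemma cdist_le_sum:
  assumes "t0 \<le> t1" "\<And>t j. t \<in> {t0..t1} \<Longrightarrow> j < mk \<Longrightarrow> \<bar>u t j - w t j\<bar> \<le> e"
  shows "cdist t0 t1 mk u w \<le> real mk * e"
proof (rule cdist_le[OF assms(1)])
  fix t assume t: "t \<in> {t0..t1}"
  have "vnorm mk (\<lambda>j. u t j - w t j) \<le> (\<Sum>j<mk. \<bar>u t j - w t j\<bar>)" by (rule vnorm_le_sum)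
  also have "\<dots> \<le> (\<Sum>j<mk. e)" using assms(2)[OF t] by (intro sum_mono) auto
  finally show "vnorm mk (\<lambda>j. u t j - w t j) \<le> real mk * e" by simp
qed

lemma admissible_ctrl_abs_le:
  assumes adm: "admissible_ctrl t0 t1 mk Mk U" and u: "u \<in> U" and t: "t \<in> {t0..t1}"
  shows "\<bar>u t j\<bar> \<le> Mk"
proof -
  have uC: "u \<in> Cspace t0 t1 mk" using adm u by (auto simp: admissible_ctrl_def)
  have cn: "cnorm t0 t1 mk u \<le> Mk" using adm u by (auto simp: admissible_ctrl_def)
  have cd: "cdist t0 t1 mk u (\<lambda>t j. 0) = cnorm t0 t1 mk u" by (simp add: cdist_def)
  have vn: "vnorm mk (u t) \<le> Mk"
    using vnorm_le_cdist[OF uC zero_in_Cspace t] cd cn by simp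
  show ?thesis
  proof (cases "j < mk")
    case True
    then show ?thesis using abs_le_vnorm[OF True, of "u t"] vn by simp
  next
    case False
    then have "u t j = 0" using uC t by (auto simp: Cspace_def is_vec_def)
    then show ?thesis using vn vnorm_nonneg[of mk "u t"] by simp
  qed
qed

lemma admissible_ctrl_equicont:
  assumes adm: "admissible_ctrl t0 t1 mk Mk U" and e: "e > 0"
  shows "\<exists>\<delta>>0. \<forall>u\<in>U. \<forall>s\<in>{t0..t1}. \<forall>t\<in>{t0..t1}. \<bar>s - t\<bar> < \<delta> \<longrightarrow> \<bar>u s j - u t j\<bar> < e"
proof -
  obtain \<delta> where d: "\<delta> > 0" "\<forall>u\<in>U. \<forall>s\<in>{t0..t1}. \<forall>t\<in>{t0..t1}. \<bar>s - t\<bar> < \<delta> \<longrightarrow> vnorm mk (\<lambda>j. u s j - u t j) < e"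
    using adm e unfolding admissible_ctrl_def equicont_ctrl_def by blast
  show ?thesis
  proof (intro exI conjI ballI impI)
    fix u s t assume u: "u \<in> U" and s: "s \<in> {t0..t1}" and t: "t \<in> {t0..t1}" and st: "\<bar>s - t\<bar> < \<delta>"
    have uC: "u \<in> Cspace t0 t1 mk" using adm u by (auto simp: admissible_ctrl_def)
    show "\<bar>u s j - u t j\<bar> < e"
    proof (cases "j < mk")
      case True
      then show ?thesis using abs_le_vnorm[OF True, of "\<lambda>j. u s j - u t j"] d u s t st by force
    next
      case False
      then show ?thesis using uC s t e by (auto simp: Cspace_def is_vec_def)
    qed
  qed (use d in auto)
qed

lemma mixture_diff_le:
  fixes b B :: real
  assumes "finite I" "\<bar>b\<bar> \<le> B" "\<And>l. l \<in> I \<Longrightarrow> \<bar>X l\<bar> \<le> B"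
  shows "\<bar>((1 - sum y I) * b + (\<Sum>l\<in>I. y l * X l)) - ((1 - sum x I) * b + (\<Sum>l\<in>I. x l * X l))\<bar>
         \<le> 2 * B * (\<Sum>l\<in>I. \<bar>y l - x l\<bar>)"
proof -
  have eq: "((1 - sum y I) * b + (\<Sum>l\<in>I. y l * X l)) - ((1 - sum x I) * b + (\<Sum>l\<in>I. x l * X l))
      = (\<Sum>l\<in>I. x l - y l) * b + (\<Sum>l\<in>I. (y l - x l) * X l)"
    by (simp add: sum_subtractf algebra_simps)
  have B0: "0 \<le> B" using assms(2) by simp
  have "\<bar>(\<Sum>l\<in>I. x l - y l) * b\<bar> \<le> (\<Sum>l\<in>I. \<bar>y l - x l\<bar>) * B"
  proof -
    have "\<bar>(\<Sum>l\<in>I. x l - y l)\<bar> \<le> (\<Sum>l\<in>I. \<bar>x l - y l\<bar>)" by (rule sum_abs)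
    also have "\<dots> = (\<Sum>l\<in>I. \<bar>y l - x l\<bar>)" by (simp add: abs_minus_commute)
    finally show ?thesis unfolding abs_mult using assms(2) by (intro mult_mono) auto
  qed
  moreover have "\<bar>\<Sum>l\<in>I. (y l - x l) * X l\<bar> \<le> (\<Sum>l\<in>I. \<bar>y l - x l\<bar>) * B"
  proof -
    have "\<bar>\<Sum>l\<in>I. (y l - x l) * X l\<bar> \<le> (\<Sum>l\<in>I. \<bar>(y l - x l) * X l\<bar>)" by (rule sum_abs)
    also have "\<dots> \<le> (\<Sum>l\<in>I. \<bar>y l - x l\<bar> * B)"
      unfolding abs_mult using assms(3) by (intro sum_mono mult_left_mono) auto
    finally show ?thesis by (simp add: sum_distrib_right)
  qed
  moreover have "2 * B * (\<Sum>l\<in>I. \<bar>y l - x l\<bar>) = (\<Sum>l\<in>I. \<bar>y l - x l\<bar>) * B + (\<Sum>l\<in>I. \<bar>y l - x l\<bar>) * B"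
    by simp
  ultimately show ?thesis unfolding eq
    using abs_triangle_ineq[of "(\<Sum>l\<in>I. x l - y l) * b" "\<Sum>l\<in>I. (y l - x l) * X l"] by linarith
qed

section \<open>The compact space of strategy profiles\<close>

lemma compact_space_positive_cover:
  assumes "compact_space X"
    and cont: "\<And>a. a \<in> A \<Longrightarrow> continuous_map X euclideanreal (h a)"
    and cover: "\<And>x. x \<in> topspace X \<Longrightarrow> \<exists>a\<in>A. 0 < h a x"
  obtains N :: nat and e where "\<forall>l<N. e l \<in> A" and "\<forall>x\<in>topspace X. \<exists>l<N. 0 < h (e l) x"
proof -
  define pos where "pos a = {x \<in> topspace X. h a x \<in> {0<..}}" for a
  have opens: "\<forall>U\<in>pos ` A. openin X U"
  proof
    fix U assume "U \<in> pos ` A"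
    then obtain a where "a \<in> A" "U = pos a" by blast
    have "openin X {x \<in> topspace X. h a x \<in> {0<..}}"
      by (rule openin_continuous_map_preimage[OF cont[OF \<open>a \<in> A\<close>]]) simp
    then show "openin X U" by (simp add: \<open>U = pos a\<close> pos_def)
  qed
  have covers: "\<Union> (pos ` A) = topspace X"
    using cover by (auto simp: pos_def)
  have "(\<forall>U\<in>pos ` A. openin X U) \<and> \<Union> (pos ` A) = topspace X
      \<longrightarrow> (\<exists>\<F>. finite \<F> \<and> \<F> \<subseteq> pos ` A \<and> \<Union> \<F> = topspace X)"
    using \<open>compact_space X\<close> unfolding compact_space by (rule spec)
  with opens covers obtain \<F> where \<F>: "finite \<F>" "\<F> \<subseteq> pos ` A" "\<Union> \<F> = topspace X"
    by auto
  obtain A' where A': "A' \<subseteq> A" "finite A'" "\<F> = pos ` A'"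
    using finite_subset_image[OF \<F>(1,2)] by blast
  obtain N :: nat and e where "A' = e ` {l. l < N}"
    using finite_imp_nat_seg_image_inj_on[OF A'(2)] by blast
  show thesis
  proof (rule that; intro allI impI ballI)
    show "e l \<in> A" if "l < N" for l
      using A'(1) \<open>A' = e ` {l. l < N}\<close> that by blast
    show "\<exists>l<N. 0 < h (e l) x" if "x \<in> topspace X" for x
    proof -
      have "x \<in> \<Union> (pos ` A')" using A'(3) \<F>(3) that by simp
      then obtain l where "l < N" "x \<in> pos (e l)" using \<open>A' = e ` {l. l < N}\<close> by auto
      then show ?thesis by (auto simp: pos_def)
    qed
  qed
qed


lemma admissible_ctrl_uniform_subseq:
  assumes adm: "admissible_ctrl t0 t1 mk Mk C" and \<sigma>: "\<And>p. \<sigma> p \<in> C"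
  obtains g and r :: "nat \<Rightarrow> nat" where "continuous_on {t0..t1} g" "strict_mono r"
    and "\<forall>e>0. \<exists>N. \<forall>p\<ge>N. \<forall>t\<in>{t0..t1}. \<bar>\<sigma> (r p) t j - g t\<bar> < e"
proof -
  have bound: "norm (\<sigma> p t j) \<le> Mk" if "t \<in> {t0..t1}" for p t
    using admissible_ctrl_abs_le[OF adm \<sigma> that] by simp
  have equicont: "\<exists>d>0. \<forall>p s. s \<in> {t0..t1} \<and> norm (t - s) < d \<longrightarrow> norm (\<sigma> p t j - \<sigma> p s j) < e"
    if "t \<in> {t0..t1}" "0 < e" for t e
  proof -
    obtain \<delta> where "\<delta> > 0" "\<forall>u\<in>C. \<forall>s\<in>{t0..t1}. \<forall>t\<in>{t0..t1}. \<bar>s - t\<bar> < \<delta> \<longrightarrow> \<bar>u s j - u t j\<bar> < e"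
      using admissible_ctrl_equicont[OF adm \<open>0 < e\<close>] by blast
    then show ?thesis using that \<sigma> by (intro exI[of _ \<delta>]) auto
  qed
  obtain g r where g: "continuous_on {t0..t1} g" and r: "strict_mono (r :: nat \<Rightarrow> nat)"
    and lim: "\<And>e. 0 < e \<Longrightarrow> \<exists>N. \<forall>p t. p \<ge> N \<and> t \<in> {t0..t1} \<longrightarrow> norm (\<sigma> (r p) t j - g t) < e"
    using Arzela_Ascoli[of "{t0..t1}" "\<lambda>p t. \<sigma> p t j" Mk] bound equicont by auto
  have "\<forall>e>0. \<exists>N. \<forall>p\<ge>N. \<forall>t\<in>{t0..t1}. \<bar>\<sigma> (r p) t j - g t\<bar> < e"
  proof (intro allI impI)
    fix e :: real assume "0 < e"
    then obtain N where "\<forall>p t. p \<ge> N \<and> t \<in> {t0..t1} \<longrightarrow> norm (\<sigma> (r p) t j - g t) < e"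
      using lim by blast
    then show "\<exists>N. \<forall>p\<ge>N. \<forall>t\<in>{t0..t1}. \<bar>\<sigma> (r p) t j - g t\<bar> < e"
      by (intro exI[of _ N]) auto
  qed
  with g r show thesis by (rule that)
qed

lemma cdist_tendsto_0I:
  assumes "t0 \<le> t1" and "\<And>p. \<sigma> p \<in> Cspace t0 t1 mk" "l \<in> Cspace t0 t1 mk"
    and unif: "\<And>e. 0 < e \<Longrightarrow> \<exists>N. \<forall>p\<ge>N. \<forall>t\<in>{t0..t1}. \<forall>j<mk. \<bar>\<sigma> p t j - l t j\<bar> < e"
  shows "(\<lambda>p. cdist t0 t1 mk (\<sigma> p) l) \<longlonglongrightarrow> 0"
proof (rule LIMSEQ_I)
  fix e :: real assume "0 < e"
  then obtain N where N: "\<forall>p\<ge>N. \<forall>t\<in>{t0..t1}. \<forall>j<mk. \<bar>\<sigma> p t j - l t j\<bar> < e / (real mk + 1)"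
    using unif[of "e / (real mk + 1)"] by auto
  have "norm (cdist t0 t1 mk (\<sigma> p) l - 0) < e" if "p \<ge> N" for p
  proof -
    have "cdist t0 t1 mk (\<sigma> p) l \<le> real mk * (e / (real mk + 1))"
      using N that by (intro cdist_le_sum \<open>t0 \<le> t1\<close>) (auto intro: less_imp_le)
    also have "\<dots> < e" using \<open>0 < e\<close> by (simp add: field_simps)
    finally show ?thesis using cdist_nonneg[OF \<open>t0 \<le> t1\<close> assms(2,3)] by simp
  qed
  then show "\<exists>N. \<forall>p\<ge>N. norm (cdist t0 t1 mk (\<sigma> p) l - 0) < e" by blast
qed

lemma pdist_commute: "pdist t0 t1 n m u w = pdist t0 t1 n m w u"
  unfolding pdist_def by (subst cdist_commute) simp

lemma profiles_update: "u \<in> profiles n U \<Longrightarrow> i \<in> {1..n} \<Longrightarrow> v \<in> U i \<Longrightarrow> u(i := v) \<in> profiles n U"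
  by (auto simp: profiles_def)

definition mixed_profile :: "(nat \<Rightarrow> real \<Rightarrow> nat \<Rightarrow> real) \<Rightarrow> nat \<Rightarrow> (nat \<Rightarrow> nat)
    \<Rightarrow> (nat \<Rightarrow> real \<Rightarrow> nat \<Rightarrow> real) \<Rightarrow> (nat \<Rightarrow> real) \<Rightarrow> nat \<Rightarrow> real \<Rightarrow> nat \<Rightarrow> real" where
  "mixed_profile b N iv V x k =
     (\<lambda>t j. (1 - sum x (block N iv k)) * b k t j + (\<Sum>l\<in>block N iv k. x l * V l t j))"

lemma mixed_profile_full_block:
  assumes x: "x \<in> block_weights N iv" and sum1: "sum x (block N iv i) = 1"
    and I: "I = {l \<in> block N iv i. 0 < x l}"
  shows "mixed_profile b N iv V x i = (\<lambda>t j. \<Sum>l\<in>I. x l * V l t j)" and "sum x I = 1"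
proof -
  have sub: "I \<subseteq> block N iv i" using I by blast
  have zero: "\<forall>l\<in>block N iv i - I. x l = 0"
  proof
    fix l assume "l \<in> block N iv i - I"
    then have "l < N" "\<not> 0 < x l" using I by (auto simp: block_def)
    moreover from x \<open>l < N\<close> have "0 \<le> x l" by (simp add: block_weights_def)
    ultimately show "x l = 0" by simp
  qed
  show "sum x I = 1"
    using sum1 sum.mono_neutral_right[OF finite_block sub zero] by simp
  have "mixed_profile b N iv V x i t j = (\<Sum>l\<in>I. x l * V l t j)" for t j
  proof -
    have "mixed_profile b N iv V x i t j = (\<Sum>l\<in>block N iv i. x l * V l t j)"
      by (simp add: mixed_profile_def sum1)
    also have "\<dots> = (\<Sum>l\<in>I. x l * V l t j)"
      using zero by (intro sum.mono_neutral_right[OF finite_block sub]) simp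
    finally show ?thesis .
  qed
  then show "mixed_profile b N iv V x i = (\<lambda>t j. \<Sum>l\<in>I. x l * V l t j)" by (intro ext)
qed

locale control_game =
  fixes t0 t1 :: real and n :: nat and m :: "nat \<Rightarrow> nat" and M :: "nat \<Rightarrow> real"
    and U :: "nat \<Rightarrow> (real \<Rightarrow> nat \<Rightarrow> real) set"
  assumes interval: "t0 < t1"
    and admissible: "\<And>k. k \<in> {1..n} \<Longrightarrow> admissible_ctrl t0 t1 (m k) (M k) (U k)"
    and convex: "\<And>k. k \<in> {1..n} \<Longrightarrow> convex_ctrl (U k)"
begin

lemma profile_Cspace:
  assumes "u \<in> profiles n U" "k \<in> {1..n}"
  shows "u k \<in> Cspace t0 t1 (m k)"
proof -
  have "u k \<in> U k" using assms by (simp add: profiles_def)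
  then show ?thesis using admissible[OF assms(2)] by (auto simp: admissible_ctrl_def)
qed

lemma cdist_profile_nonneg:
  "u \<in> profiles n U \<Longrightarrow> w \<in> profiles n U \<Longrightarrow> k \<in> {1..n} \<Longrightarrow> 0 \<le> cdist t0 t1 (m k) (u k) (w k)"
  using cdist_nonneg[OF less_imp_le[OF interval] profile_Cspace profile_Cspace] .

lemma pdist_nonneg: "u \<in> profiles n U \<Longrightarrow> w \<in> profiles n U \<Longrightarrow> 0 \<le> pdist t0 t1 n m u w"
  unfolding pdist_def by (intro sum_nonneg cdist_profile_nonneg)

lemma pdist_triangle:
  assumes "u \<in> profiles n U" "v \<in> profiles n U" "w \<in> profiles n U"
  shows "pdist t0 t1 n m u w \<le> pdist t0 t1 n m u v + pdist t0 t1 n m v w"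
  unfolding pdist_def sum.distrib[symmetric] using interval assms
  by (intro sum_mono cdist_triangle profile_Cspace) auto

lemma pdist_eq_0_iff:
  assumes "u \<in> profiles n U" "w \<in> profiles n U"
  shows "pdist t0 t1 n m u w = 0 \<longleftrightarrow> u = w"
proof
  assume "pdist t0 t1 n m u w = 0"
  then have zero: "cdist t0 t1 (m k) (u k) (w k) = 0" if "k \<in> {1..n}" for k
    using assms that unfolding pdist_def by (subst (asm) sum_nonneg_eq_0_iff) (auto intro: cdist_profile_nonneg)
  show "u = w"
  proof
    fix k show "u k = w k"
    proof (cases "k \<in> {1..n}")
      case True
      show ?thesis
        by (rule cdist_eq_0_imp_eq[OF less_imp_le[OF interval] profile_Cspace[OF assms(1) True]
              profile_Cspace[OF assms(2) True] zero[OF True]])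
    qed (use assms in \<open>simp add: profiles_def\<close>)
  qed
qed (simp add: pdist_def less_imp_le[OF interval])

lemma pdist_update_le:
  assumes "u \<in> profiles n U" "u' \<in> profiles n U"
  shows "pdist t0 t1 n m (u'(i := v)) (u(i := v)) \<le> pdist t0 t1 n m u' u"
  unfolding pdist_def using assms less_imp_le[OF interval] by (intro sum_mono) (auto intro: cdist_profile_nonneg)

(* pdist is nonnegative only on profiles, where the suprema defining cdist are finite, while
   Metric_space asks for nonnegativity everywhere. *)
definition profile_dist where
  "profile_dist u w = (if u \<in> profiles n U \<and> w \<in> profiles n U then pdist t0 t1 n m u w else 0)"

sublocale profile: Metric_space "profiles n U" profile_dist
proof
  show "0 \<le> profile_dist u w" for u w by (simp add: profile_dist_def pdist_nonneg)
  show "profile_dist u w = profile_dist w u" for u w by (simp add: profile_dist_def pdist_commute)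
  show "u \<in> profiles n U \<Longrightarrow> w \<in> profiles n U \<Longrightarrow> profile_dist u w = 0 \<longleftrightarrow> u = w" for u w
    by (simp add: profile_dist_def pdist_eq_0_iff)
  show "u \<in> profiles n U \<Longrightarrow> v \<in> profiles n U \<Longrightarrow> w \<in> profiles n U \<Longrightarrow>
      profile_dist u w \<le> profile_dist u v + profile_dist v w" for u v w
    by (simp add: profile_dist_def pdist_triangle)
qed

lemma limitin_profileI:
  assumes "l \<in> profiles n U" "\<And>p. \<sigma> p \<in> profiles n U" "(\<lambda>p. pdist t0 t1 n m (\<sigma> p) l) \<longlonglongrightarrow> 0"
  shows "limitin profile.mtopology \<sigma> l sequentially"
  using assms by (simp add: profile.limitin_metric_dist_null profile_dist_def)

lemma continuous_map_profileI:
  assumes "\<And>u e. u \<in> profiles n U \<Longrightarrow> 0 < e \<Longrightarrow>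
      \<exists>\<delta>>0. \<forall>u'\<in>profiles n U. pdist t0 t1 n m u' u < \<delta> \<longrightarrow> \<bar>f u' - f u\<bar> < e"
  shows "continuous_map profile.mtopology euclideanreal f"
proof -
  have "\<exists>\<delta>>0. \<forall>u'. u' \<in> profiles n U \<and> profile_dist u u' < \<delta> \<longrightarrow> dist (f u) (f u') < e"
    if u: "u \<in> profiles n U" and e: "0 < e" for u e
  proof -
    obtain \<delta> where "0 < \<delta>" "\<forall>u'\<in>profiles n U. pdist t0 t1 n m u' u < \<delta> \<longrightarrow> \<bar>f u' - f u\<bar> < e"
      using assms[OF u e] by blast
    then show ?thesis
      using u by (metis dist_commute dist_real_def pdist_commute profile_dist_def)
  qed
  then show ?thesis
    using profile.metric_continuous_map[OF Met_TC.Metric_space_axioms, of f] by simp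
qed

lemma continuous_map_profile_update:
  assumes "i \<in> {1..n}" "v \<in> U i"
  shows "continuous_map profile.mtopology profile.mtopology (\<lambda>u. u(i := v))"
proof -
  have "profile_dist (u(i := v)) (u'(i := v)) \<le> profile_dist u u'"
    if "u \<in> profiles n U" "u' \<in> profiles n U" for u u'
    using that assms pdist_update_le[of u' u] by (simp add: profile_dist_def profiles_update)
  then show ?thesis
    using assms by (subst profile.metric_continuous_map[OF profile.Metric_space_axioms])
      (fastforce simp: profiles_update)
qed

lemma continuous_map_ivl_endpoints:
  assumes "ivl_continuous_on (pdist t0 t1 n m) (profiles n U) F"
  shows "continuous_map profile.mtopology euclideanreal (\<lambda>u. lower (F u))"
    and "continuous_map profile.mtopology euclideanreal (\<lambda>u. upper (F u))"
  using ivl_continuous_onD[OF assms] by (intro continuous_map_profileI; metis)+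

lemma profiles_uniform_subseq:
  fixes \<sigma> :: "nat \<Rightarrow> nat \<Rightarrow> real \<Rightarrow> nat \<Rightarrow> real"
  assumes \<sigma>: "\<And>p. \<sigma> p \<in> profiles n U"
  shows "\<exists>(r :: nat \<Rightarrow> nat) G. strict_mono r \<and> (\<forall>k\<in>{1..n}. \<forall>j<m k. continuous_on {t0..t1} (G k j) \<and>
           (\<forall>e>0. \<exists>N. \<forall>p\<ge>N. \<forall>t\<in>{t0..t1}. \<bar>\<sigma> (r p) k t j - G k j t\<bar> < e))"
proof -
  have \<sigma>U: "\<sigma> p k \<in> U k" if "k \<in> {1..n}" for p k using \<sigma> that by (simp add: profiles_def)
  define I where "I = Sigma {1..n} (\<lambda>k. {..<m k})"
  define conv where "conv kj r \<longleftrightarrow> (\<exists>g. continuous_on {t0..t1} g \<and>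
      (\<forall>e>0. \<exists>N. \<forall>p\<ge>N. \<forall>t\<in>{t0..t1}. \<bar>\<sigma> (r p) (fst kj) t (snd kj) - g t\<bar> < e))" for kj and r :: "nat \<Rightarrow> nat"
  have "\<exists>r. strict_mono r \<and> (\<forall>kj\<in>I. conv kj r)"
  proof (rule finite_common_subseq)
    fix kj and r :: "nat \<Rightarrow> nat" assume "kj \<in> I"
    then have "fst kj \<in> {1..n}" by (auto simp: I_def)
    then have "\<And>p. \<sigma> (r p) (fst kj) \<in> U (fst kj)" using \<sigma>U by blast
    from admissible_ctrl_uniform_subseq[where \<sigma>="\<lambda>p. \<sigma> (r p) (fst kj)" and j="snd kj",
        OF admissible[OF \<open>fst kj \<in> {1..n}\<close>] this]
    obtain g and r' :: "nat \<Rightarrow> nat" where "continuous_on {t0..t1} g" "strict_mono r'"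
      and "\<forall>e>0. \<exists>N. \<forall>p\<ge>N. \<forall>t\<in>{t0..t1}. \<bar>\<sigma> (r (r' p)) (fst kj) t (snd kj) - g t\<bar> < e" .
    then show "\<exists>r'::nat \<Rightarrow> nat. strict_mono r' \<and> conv kj (r \<circ> r')"
      unfolding conv_def by auto
  next
    fix kj r and k :: "nat \<Rightarrow> nat" assume "conv kj r" "strict_mono k"
    then obtain g where g: "continuous_on {t0..t1} g"
      and lim: "\<And>e. 0 < e \<Longrightarrow> \<exists>N. \<forall>p\<ge>N. \<forall>t\<in>{t0..t1}. \<bar>\<sigma> (r p) (fst kj) t (snd kj) - g t\<bar> < e"
      unfolding conv_def by blast
    have "\<exists>N. \<forall>p\<ge>N. \<forall>t\<in>{t0..t1}. \<bar>\<sigma> (r (k p)) (fst kj) t (snd kj) - g t\<bar> < e" if e: "0 < e" for e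
    proof -
      obtain N where N: "\<forall>p\<ge>N. \<forall>t\<in>{t0..t1}. \<bar>\<sigma> (r p) (fst kj) t (snd kj) - g t\<bar> < e"
        using lim[OF e] by blast
      have "N \<le> k p" if "N \<le> p" for p using seq_suble[OF \<open>strict_mono k\<close>, of p] that by linarith
      then show ?thesis using N by (intro exI[of _ N]) blast
    qed
    then show "conv kj (r \<circ> k)" unfolding conv_def using g by auto
  qed (simp add: I_def)
  then obtain r where r: "strict_mono r" and conv_r: "\<forall>kj\<in>I. conv kj r" by blast
  from conv_r have "\<forall>kj\<in>I. \<exists>g. continuous_on {t0..t1} g \<and>
      (\<forall>e>0. \<exists>N. \<forall>p\<ge>N. \<forall>t\<in>{t0..t1}. \<bar>\<sigma> (r p) (fst kj) t (snd kj) - g t\<bar> < e)"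
    unfolding conv_def .
  from bchoice[OF this] obtain G where G_all: "\<forall>kj\<in>I. continuous_on {t0..t1} (G kj) \<and>
      (\<forall>e>0. \<exists>N. \<forall>p\<ge>N. \<forall>t\<in>{t0..t1}. \<bar>\<sigma> (r p) (fst kj) t (snd kj) - G kj t\<bar> < e)" ..
  have "continuous_on {t0..t1} (G (k, j)) \<and>
      (\<forall>e>0. \<exists>N. \<forall>p\<ge>N. \<forall>t\<in>{t0..t1}. \<bar>\<sigma> (r p) k t j - G (k, j) t\<bar> < e)"
    if "k \<in> {1..n}" "j < m k" for k j
    using bspec[OF G_all, of "(k, j)"] that by (simp add: I_def)
  with r show ?thesis by (intro exI[of _ r] exI[of _ "\<lambda>k j. G (k, j)"]) simp
qed

lemma profiles_convergent_subseq:
  fixes \<sigma> :: "nat \<Rightarrow> nat \<Rightarrow> real \<Rightarrow> nat \<Rightarrow> real"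
  assumes \<sigma>: "\<And>p. \<sigma> p \<in> profiles n U"
  obtains l and r :: "nat \<Rightarrow> nat"
  where "l \<in> profiles n U" "strict_mono r" "(\<lambda>p. pdist t0 t1 n m (\<sigma> (r p)) l) \<longlonglongrightarrow> 0"
proof -
  have \<sigma>U: "\<sigma> p k \<in> U k" if "k \<in> {1..n}" for p k using \<sigma> that by (simp add: profiles_def)
  obtain r :: "nat \<Rightarrow> nat" and G where r: "strict_mono r"
    and G: "\<forall>k\<in>{1..n}. \<forall>j<m k. continuous_on {t0..t1} (G k j) \<and>
           (\<forall>e>0. \<exists>N. \<forall>p\<ge>N. \<forall>t\<in>{t0..t1}. \<bar>\<sigma> (r p) k t j - G k j t\<bar> < e)"
    using profiles_uniform_subseq[of \<sigma>, OF \<sigma>] by blast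
  define l where "l k t j = (if k \<in> {1..n} \<and> j < m k \<and> t \<in> {t0..t1} then G k j t else 0)" for k t j
  have l_Cspace: "l k \<in> Cspace t0 t1 (m k)" for k
    unfolding Cspace_def is_vec_def
  proof (intro CollectI conjI ballI allI impI)
    show "continuous_on {t0..t1} (\<lambda>t. l k t j)" for j
    proof (cases "k \<in> {1..n} \<and> j < m k")
      case True
      then have "continuous_on {t0..t1} (G k j)" using G by simp
      then show ?thesis by (rule continuous_on_eq) (use \<open>k \<in> {1..n} \<and> j < m k\<close> in \<open>simp add: l_def\<close>)
    next
      case False
      have "l k t j = 0" for t
        unfolding l_def by (rule if_not_P) (use False in blast)
      then show ?thesis by simp
    qed
  qed (auto simp: l_def)
  have cdist_l: "(\<lambda>p. cdist t0 t1 (m k) (\<sigma> (r p) k) (l k)) \<longlonglongrightarrow> 0" if k: "k \<in> {1..n}" for k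
  proof (rule cdist_tendsto_0I[OF less_imp_le[OF interval] profile_Cspace[OF \<sigma> k] l_Cspace])
    fix e :: real assume "0 < e"
    then have "\<forall>j\<in>{..<m k}. eventually (\<lambda>p. \<forall>t\<in>{t0..t1}. \<bar>\<sigma> (r p) k t j - G k j t\<bar> < e) sequentially"
      using G k unfolding eventually_sequentially by force
    then have "eventually (\<lambda>p. \<forall>j\<in>{..<m k}. \<forall>t\<in>{t0..t1}. \<bar>\<sigma> (r p) k t j - G k j t\<bar> < e) sequentially"
      by (simp add: eventually_ball_finite)
    then show "\<exists>N. \<forall>p\<ge>N. \<forall>t\<in>{t0..t1}. \<forall>j<m k. \<bar>\<sigma> (r p) k t j - l k t j\<bar> < e"
      unfolding eventually_sequentially l_def using k by auto
  qed
  have "l k \<in> U k" if k: "k \<in> {1..n}" for k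
  proof -
    have "closed_ctrl t0 t1 (m k) (U k)" using admissible[OF k] by (simp add: admissible_ctrl_def)
    from this[unfolded closed_ctrl_def, rule_format, of "\<lambda>p. \<sigma> (r p) k" "l k"]
    show ?thesis using \<sigma>U[OF k] l_Cspace cdist_l[OF k] by simp
  qed
  moreover have "l k = (\<lambda>t j. 0)" if "k \<notin> {1..n}" for k
    unfolding l_def using that by (intro ext if_not_P) blast
  ultimately have "l \<in> profiles n U" by (simp add: profiles_def)
  moreover have "(\<lambda>p. pdist t0 t1 n m (\<sigma> (r p)) l) \<longlonglongrightarrow> 0"
    unfolding pdist_def by (intro tendsto_null_sum cdist_l)
  ultimately show thesis using that r by blast
qed

lemma compact_space_profiles: "compact_space profile.mtopology"
  unfolding profile.compact_space_sequentially
proof (intro allI impI)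
  fix \<sigma> :: "nat \<Rightarrow> nat \<Rightarrow> real \<Rightarrow> nat \<Rightarrow> real" assume "range \<sigma> \<subseteq> profiles n U"
  then have \<sigma>: "\<And>p. \<sigma> p \<in> profiles n U" by auto
  obtain l and r :: "nat \<Rightarrow> nat" where "l \<in> profiles n U" "strict_mono r"
    and "(\<lambda>p. pdist t0 t1 n m (\<sigma> (r p)) l) \<longlonglongrightarrow> 0"
    by (rule profiles_convergent_subseq[OF \<sigma>])
  then show "\<exists>l r. l \<in> profiles n U \<and> strict_mono r \<and> limitin profile.mtopology (\<sigma> \<circ> r) l sequentially"
    using \<sigma> by (intro exI[of _ l] exI[of _ r]) (simp add: limitin_profileI comp_def)
qed

lemma ctrl_abs_le_sum_bounds:
  assumes "k \<in> {1..n}" "v \<in> U k" "t \<in> {t0..t1}"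
  shows "\<bar>v t j\<bar> \<le> (\<Sum>k\<in>{1..n}. \<bar>M k\<bar>)"
proof -
  have "\<bar>v t j\<bar> \<le> M k" by (rule admissible_ctrl_abs_le[OF admissible[OF assms(1)] assms(2,3)])
  also have "\<dots> \<le> (\<Sum>k\<in>{1..n}. \<bar>M k\<bar>)"
    using assms(1) member_le_sum[of k "{1..n}" "\<lambda>k. \<bar>M k\<bar>"] by simp
  finally show ?thesis .
qed

lemma mixed_profile_in_profiles:
  assumes b: "b \<in> profiles n U" and V: "\<And>l. l < N \<Longrightarrow> iv l \<in> {1..n} \<and> V l \<in> U (iv l)"
    and x: "x \<in> block_weights N iv"
  shows "mixed_profile b N iv V x \<in> profiles n U"
  unfolding profiles_def
proof (intro CollectI conjI ballI allI impI)
  fix k assume k: "k \<in> {1..n}"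
  show "mixed_profile b N iv V x k \<in> U k"
    unfolding mixed_profile_def
    by (rule convex_ctrl_sum_with_base[OF convex[OF k]])
      (use b V x k in \<open>auto simp: profiles_def block_weights_def block_def\<close>)
next
  fix k assume "k \<notin> {1..n}"
  then have "block N iv k = {}" "b k = (\<lambda>t j. 0)" using b V by (auto simp: block_def profiles_def)
  then show "mixed_profile b N iv V x k = (\<lambda>t j. 0)" by (simp add: mixed_profile_def)
qed

lemma mixed_profile_tendsto:
  assumes b: "b \<in> profiles n U" and V: "\<And>l. l < N \<Longrightarrow> iv l \<in> {1..n} \<and> V l \<in> U (iv l)"
    and x: "x \<in> block_weights N iv" and y: "\<And>p. y p \<in> block_weights N iv"
    and conv: "\<And>l. l < N \<Longrightarrow> (\<lambda>p. y p l) \<longlonglongrightarrow> x l"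
  shows "(\<lambda>p. pdist t0 t1 n m (mixed_profile b N iv V (y p)) (mixed_profile b N iv V x)) \<longlonglongrightarrow> 0"
proof -
  define B where "B = (\<Sum>k\<in>{1..n}. \<bar>M k\<bar>)"
  define \<delta> where "\<delta> p = (\<Sum>l<N. \<bar>y p l - x l\<bar>)" for p
  define C where "C = (\<Sum>k\<in>{1..n}. real (m k)) * (2 * B)"
  have "\<delta> \<longlonglongrightarrow> 0" unfolding \<delta>_def
    by (intro tendsto_null_sum tendsto_rabs_zero LIM_zero conv) auto
  then have C\<delta>: "(\<lambda>p. C * \<delta> p) \<longlonglongrightarrow> 0" using tendsto_mult_right_zero by blast
  have "pdist t0 t1 n m (mixed_profile b N iv V (y p)) (mixed_profile b N iv V x) \<le> C * \<delta> p" for p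
  proof -
    have "cdist t0 t1 (m k) (mixed_profile b N iv V (y p) k) (mixed_profile b N iv V x k) \<le> real (m k) * (2 * B * \<delta> p)"
      if k: "k \<in> {1..n}" for k
    proof (rule cdist_le_sum[OF less_imp_le[OF interval]])
      fix t j assume t: "t \<in> {t0..t1}"
      have "\<bar>mixed_profile b N iv V (y p) k t j - mixed_profile b N iv V x k t j\<bar>
          \<le> 2 * B * (\<Sum>l\<in>block N iv k. \<bar>y p l - x l\<bar>)"
        unfolding mixed_profile_def B_def using b V k t
        by (intro mixture_diff_le finite_block ctrl_abs_le_sum_bounds) (auto simp: profiles_def block_def)
      also have "\<dots> \<le> 2 * B * \<delta> p"
        unfolding \<delta>_def B_def using block_subset[of N iv k] by (intro mult_left_mono sum_mono2) auto
      finally show "\<bar>mixed_profile b N iv V (y p) k t j - mixed_profile b N iv V x k t j\<bar> \<le> 2 * B * \<delta> p" .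
    qed
    then have "pdist t0 t1 n m (mixed_profile b N iv V (y p)) (mixed_profile b N iv V x)
        \<le> (\<Sum>k\<in>{1..n}. real (m k) * (2 * B * \<delta> p))"
      unfolding pdist_def by (intro sum_mono) auto
    also have "\<dots> = C * \<delta> p" unfolding C_def by (simp add: sum_distrib_right mult.assoc)
    finally show ?thesis .
  qed
  moreover have "0 \<le> pdist t0 t1 n m (mixed_profile b N iv V (y p)) (mixed_profile b N iv V x)" for p
    by (intro pdist_nonneg mixed_profile_in_profiles b V x y)
  ultimately show ?thesis
    by (intro Lim_null_comparison[OF always_eventually C\<delta>]) simp
qed

section \<open>Existence of an equilibrium\<close>

lemma profiles_nonempty: "\<exists>b. b \<in> profiles n U"
proof -
  have "U k \<noteq> {}" if "k \<in> {1..n}" for k using admissible[OF that] by (simp add: admissible_ctrl_def)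
  then have "(\<lambda>k. if k \<in> {1..n} then SOME v. v \<in> U k else (\<lambda>t j. 0)) \<in> profiles n U"
    by (auto simp: profiles_def some_in_eq)
  then show ?thesis by blast
qed

lemma continuous_map_gain:
  assumes "ivl_continuous_on (pdist t0 t1 n m) (profiles n U) (G i)" "i \<in> {1..n}" "v \<in> U i"
  shows "continuous_map profile.mtopology euclideanreal (gain G i v)"
proof -
  note endpoints = continuous_map_ivl_endpoints[OF assms(1)]
  have "continuous_map profile.mtopology euclideanreal (\<lambda>u. lower (G i (u(i := v))))"
    and "continuous_map profile.mtopology euclideanreal (\<lambda>u. upper (G i (u(i := v))))"
    using continuous_map_compose[OF continuous_map_profile_update[OF assms(2,3)] endpoints(1)]
      continuous_map_compose[OF continuous_map_profile_update[OF assms(2,3)] endpoints(2)]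
    by (simp_all add: comp_def)
  with endpoints show ?thesis
    unfolding gain_def by (intro continuous_map_real_min continuous_map_diff)
qed

lemma gain_weights_fixpoint:
  fixes G :: "nat \<Rightarrow> (nat \<Rightarrow> real \<Rightarrow> nat \<Rightarrow> real) \<Rightarrow> real interval" and N :: nat
  assumes cont: "\<And>i. i \<in> {1..n} \<Longrightarrow> ivl_continuous_on (pdist t0 t1 n m) (profiles n U) (G i)"
    and b: "b \<in> profiles n U" and V: "\<And>l. l < N \<Longrightarrow> iv l \<in> {1..n} \<and> V l \<in> U (iv l)"
  defines "g x l \<equiv> gain G (iv l) (V l) (mixed_profile b N iv V x)"
  obtains x where "x \<in> block_weights N iv"
    and "\<forall>k. (\<exists>l\<in>block N iv k. 0 < g x l) \<longrightarrow>
           sum x (block N iv k) = 1 \<and> (\<forall>l\<in>block N iv k. 0 < x l \<longrightarrow> 0 < g x l)"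
proof -
  have "(\<lambda>k. max 0 (g (y k) l)) \<longlonglongrightarrow> max 0 (g x l)"
    if "x \<in> block_weights N iv" "\<And>k. y k \<in> block_weights N iv"
      "\<And>j. j < N \<Longrightarrow> (\<lambda>k. y k j) \<longlonglongrightarrow> x j" "l < N" for x y l
  proof -
    have "limitin profile.mtopology (\<lambda>k. mixed_profile b N iv V (y k)) (mixed_profile b N iv V x) sequentially"
      using that by (intro limitin_profileI mixed_profile_tendsto[OF b V] mixed_profile_in_profiles[OF b V]) auto
    from continuous_map_limit[OF continuous_map_gain[OF cont] this] V[OF \<open>l < N\<close>]
    have "(\<lambda>k. g (y k) l) \<longlonglongrightarrow> g x l" by (simp add: comp_def g_def)
    then show ?thesis by (intro tendsto_max tendsto_const)
  qed
  then obtain x where x: "x \<in> block_weights N iv"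
    and "\<forall>k. (\<exists>l\<in>block N iv k. 0 < max 0 (g x l)) \<longrightarrow>
           sum x (block N iv k) = 1 \<and> (\<forall>l\<in>block N iv k. 0 < x l \<longrightarrow> 0 < max 0 (g x l))"
    by (rule nash_block_weights[of "\<lambda>x l. max 0 (g x l)", OF max.cobounded1])
  moreover have "0 < max 0 (g x l) \<longleftrightarrow> 0 < g x l" for l by (auto simp: max_def)
  ultimately have "\<forall>k. (\<exists>l\<in>block N iv k. 0 < g x l) \<longrightarrow>
      sum x (block N iv k) = 1 \<and> (\<forall>l\<in>block N iv k. 0 < x l \<longrightarrow> 0 < g x l)"
    by simp
  with x show thesis by (rule that)
qed

(* At a fixed point of Nash's map some player mixes only deviations that gain against the fixed
   profile; by quasi-concavity the mixture, which is her own strategy, gains against itself. *)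
lemma finite_deviations_not_covering:
  fixes G :: "nat \<Rightarrow> (nat \<Rightarrow> real \<Rightarrow> nat \<Rightarrow> real) \<Rightarrow> real interval" and N :: nat
  assumes cont: "\<And>i. i \<in> {1..n} \<Longrightarrow> ivl_continuous_on (pdist t0 t1 n m) (profiles n U) (G i)"
    and qc: "\<And>i u. i \<in> {1..n} \<Longrightarrow> u \<in> profiles n U \<Longrightarrow>
               gen_quasi_concave ctrl_comb (U i) (\<lambda>v. G i (u(i := v)))"
    and V: "\<And>l. l < N \<Longrightarrow> iv l \<in> {1..n} \<and> V l \<in> U (iv l)"
  shows "\<exists>u\<in>profiles n U. \<forall>l<N. gain G (iv l) (V l) u \<le> 0"
proof -
  obtain b where b: "b \<in> profiles n U" using profiles_nonempty by blast
  obtain x where x: "x \<in> block_weights N iv"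
    and nash: "\<forall>k. (\<exists>l\<in>block N iv k. 0 < gain G (iv l) (V l) (mixed_profile b N iv V x)) \<longrightarrow>
                 sum x (block N iv k) = 1 \<and>
                 (\<forall>l\<in>block N iv k. 0 < x l \<longrightarrow> 0 < gain G (iv l) (V l) (mixed_profile b N iv V x))"
    by (rule gain_weights_fixpoint[OF cont b V])
  define u where "u = mixed_profile b N iv V x"
  have u: "u \<in> profiles n U" unfolding u_def by (rule mixed_profile_in_profiles[OF b V x])
  have "\<forall>l<N. gain G (iv l) (V l) u \<le> 0"
  proof (rule ccontr)
    assume "\<not> ?thesis"
    then obtain l0 where l0: "l0 < N" "0 < gain G (iv l0) (V l0) u" by (auto simp: not_le)
    define i where "i = iv l0"
    have i: "i \<in> {1..n}" using V[OF l0(1)] by (simp add: i_def)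
    have "\<exists>l\<in>block N iv i. 0 < gain G (iv l) (V l) u"
      using l0 by (intro bexI[of _ l0]) (simp_all add: block_def i_def)
    with nash have sum1: "sum x (block N iv i) = 1"
      and pos: "\<forall>l\<in>block N iv i. 0 < x l \<longrightarrow> 0 < gain G i (V l) u"
      by (auto simp: u_def block_def)
    define Ip where "Ip = {l \<in> block N iv i. 0 < x l}"
    let ?C = "{v \<in> U i. in_int_Rplus (gH_diff (G i (u(i := v))) (G i u))}"
    have "V l \<in> ?C" if "l \<in> Ip" for l
      using pos that V[of l] by (auto simp: Ip_def block_def gain_pos_iff)
    moreover have "sum x Ip = 1"
      by (rule mixed_profile_full_block(2)[OF x sum1 Ip_def])
    moreover from this have "Ip \<noteq> {}" by auto
    moreover have "gen_quasi_concave ctrl_comb (U i) (\<lambda>v. G i (u(i := v)))"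
      by (rule qc[OF i u])
    ultimately have "(\<lambda>t j. \<Sum>l\<in>Ip. x l * V l t j) \<in> ?C"
      by (intro convex_ctrl_sum[OF convex_ctrl_improvements[OF convex[OF i]]]) (auto simp: Ip_def)
    moreover have "u i = (\<lambda>t j. \<Sum>l\<in>Ip. x l * V l t j)"
      unfolding u_def by (rule mixed_profile_full_block(1)[OF x sum1 Ip_def])
    ultimately have "u i \<in> ?C" by simp
    then show False by (simp add: in_int_Rplus_gH_diff_iff)
  qed
  with u show ?thesis by blast
qed

theorem interval_nash_equilibrium:
  fixes G :: "nat \<Rightarrow> (nat \<Rightarrow> real \<Rightarrow> nat \<Rightarrow> real) \<Rightarrow> real interval"
  assumes cont: "\<And>i. i \<in> {1..n} \<Longrightarrow> ivl_continuous_on (pdist t0 t1 n m) (profiles n U) (G i)"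
    and qc: "\<And>i u. i \<in> {1..n} \<Longrightarrow> u \<in> profiles n U \<Longrightarrow>
               gen_quasi_concave ctrl_comb (U i) (\<lambda>v. G i (u(i := v)))"
  shows "\<exists>u\<in>profiles n U. \<forall>i\<in>{1..n}. \<forall>v\<in>U i. \<not> in_int_Rplus (gH_diff (G i (u(i := v))) (G i u))"
proof (rule ccontr)
  assume no_equilibrium: "\<not> ?thesis"
  have improvable: "\<exists>a\<in>Sigma {1..n} U. 0 < gain G (fst a) (snd a) u"
    if "u \<in> topspace profile.mtopology" for u
  proof -
    have "u \<in> profiles n U" using that by simp
    with no_equilibrium obtain i v where "i \<in> {1..n}" "v \<in> U i"
      "in_int_Rplus (gH_diff (G i (u(i := v))) (G i u))" by blast
    then show ?thesis by (intro bexI[of _ "(i, v)"]) (simp_all add: gain_pos_iff)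
  qed
  have gain_cont: "continuous_map profile.mtopology euclideanreal (gain G (fst a) (snd a))"
    if "a \<in> Sigma {1..n} U" for a
    using that by (intro continuous_map_gain[OF cont]) auto
  obtain N :: nat and e where e: "\<forall>l<N. e l \<in> Sigma {1..n} U"
    and cover: "\<forall>u\<in>topspace profile.mtopology. \<exists>l<N. 0 < gain G (fst (e l)) (snd (e l)) u"
    by (rule compact_space_positive_cover[OF compact_space_profiles gain_cont improvable])
  have deviations: "fst (e l) \<in> {1..n} \<and> snd (e l) \<in> U (fst (e l))" if "l < N" for l
  proof -
    obtain i v where "e l = (i, v)" by (cases "e l")
    with e that show ?thesis by auto
  qed
  from finite_deviations_not_covering[where iv = "\<lambda>l. fst (e l)" and V = "\<lambda>l. snd (e l)",
      OF cont qc deviations]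
  obtain u where u: "u \<in> profiles n U" and no_gain: "\<forall>l<N. gain G (fst (e l)) (snd (e l)) u \<le> 0"
    by blast
  from cover u obtain l where "l < N" "0 < gain G (fst (e l)) (snd (e l)) u" by auto
  with no_gain show False by force
qed

end

theorem theorem3p2:
  fixes n :: nat and t0 t1 :: real and x0 :: "real^'m"
    and m :: "nat \<Rightarrow> nat" and M :: "nat \<Rightarrow> real"
    and U :: "nat \<Rightarrow> (real \<Rightarrow> nat \<Rightarrow> real) set"
    and f :: "real \<Rightarrow> real^'m \<Rightarrow> (nat \<Rightarrow> nat \<Rightarrow> real) \<Rightarrow> real^'m"
    and d :: "nat \<Rightarrow> nat"
    and psi :: "nat \<Rightarrow> real^'m \<Rightarrow> nat \<Rightarrow> real interval"
    and L :: "nat \<Rightarrow> real \<Rightarrow> real^'m \<Rightarrow> (nat \<Rightarrow> nat \<Rightarrow> real) \<Rightarrow> nat \<Rightarrow> real interval"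
  assumes "n \<ge> 1" and "0 \<le> t0" and "t0 < t1"
    and "\<forall>k\<in>{1..n}. M k > 0 \<and> admissible_ctrl t0 t1 (m k) (M k) (U k) \<and> convex_ctrl (U k)"
    and "classY t0 t1 n m M f"
    and "\<forall>i\<in>{1..n}. \<exists>ki\<in>{1..d i}.
           ivl_continuous_on (pdist t0 t1 n m) (profiles n U)
              (\<lambda>u. payoff t0 t1 x0 f (psi i) (L i) u ki)
         \<and> (\<forall>u\<in>profiles n U. gen_quasi_concave ctrl_comb (U i)
              (\<lambda>v. payoff t0 t1 x0 f (psi i) (L i) (u(i := v)) ki))"
  shows "\<exists>ustar\<in>profiles n U. \<forall>i\<in>{1..n}. \<forall>v\<in>U i.
           \<not> ivl_prec (d i) (payoff t0 t1 x0 f (psi i) (L i) ustar)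
                           (payoff t0 t1 x0 f (psi i) (L i) (ustar(i := v)))"
proof -
  (* n \<ge> 1, 0 \<le> t0, M k > 0 and f \<in> Y only make the payoffs meaningful: the argument
     uses the payoffs solely through the continuity and quasi-concavity hypotheses. *)
  interpret control_game t0 t1 n m M U
    using assms(3,4) by unfold_locales auto
  obtain k where k: "\<forall>i\<in>{1..n}. k i \<in> {1..d i}
      \<and> ivl_continuous_on (pdist t0 t1 n m) (profiles n U) (\<lambda>u. payoff t0 t1 x0 f (psi i) (L i) u (k i))
      \<and> (\<forall>u\<in>profiles n U. gen_quasi_concave ctrl_comb (U i)
            (\<lambda>v. payoff t0 t1 x0 f (psi i) (L i) (u(i := v)) (k i)))"
    using bchoice[OF assms(6)[unfolded Bex_def]] by blast
  define G where "G i u = payoff t0 t1 x0 f (psi i) (L i) u (k i)" for i u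
  obtain ustar where ustar: "ustar \<in> profiles n U"
    and no_gain: "\<forall>i\<in>{1..n}. \<forall>v\<in>U i. \<not> in_int_Rplus (gH_diff (G i (ustar(i := v))) (G i ustar))"
    using interval_nash_equilibrium[of G] k unfolding G_def by blast
  have "\<not> ivl_prec (d i) (payoff t0 t1 x0 f (psi i) (L i) ustar)
                        (payoff t0 t1 x0 f (psi i) (L i) (ustar(i := v)))"
    if "i \<in> {1..n}" "v \<in> U i" for i v
    using no_gain k that unfolding ivl_prec_def G_def by blast
  with ustar show ?thesis by blast
qed

end
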